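(* Let $X$ be a proper $\mathrm{CAT}(0)$ space, and let $G$ be a group acting by isometries on $X$. Let $(g_n)_{n\in\mathbb N}$ be a sequence in $G$ that escapes every compact subspace of $X$. Then there exist a subsequence $(g_{\sigma(n)})_{n\in\mathbb N}$ and points $\xi^-,\xi^+\in\partial_\infty X$ such that for every $\xi\in(\partial_\infty X)^{\mathrm{vis}}\setminus\{\xi^-\}$, the sequence $(g_{\sigma(n)}\xi)_{n\in\mathbb N}$ converges to $\xi^+$.
   Context: $\partial_\infty X$ is the visual boundary with the visual topology. $(\partial_\infty X)^{\mathrm{vis}}$ is the set of visibility points: points $\xi\in\partial_\infty X$ such that every $\eta\in\partial_\infty X$ with $\eta\neq\xi$ can be joined to $\xi$ by a geodesic line in $X$. A sequence $(g_n)$ escapes every compact subspace of $X$ if for some (equivalently any) $x\in X$, $(g_nx)$ eventually leaves every compact subset of $X$. *)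

theory Defs
  imports "HOL-Analysis.Analysis" "HOL-Algebra.Group"
begin

text \<open>The metric space X is the whole type 'a (a metric_space).\<close>

definition proper_sp :: "'a::metric_space itself \<Rightarrow> bool" where
  "proper_sp T \<longleftrightarrow> (\<forall>(x::'a) r. compact (cball x r))"

definition geoseg :: "(real \<Rightarrow> 'a::metric_space) \<Rightarrow> 'a \<Rightarrow> 'a \<Rightarrow> bool" where
  "geoseg \<gamma> x y \<longleftrightarrow> \<gamma> 0 = x \<and> \<gamma> (dist x y) = y \<and>
     (\<forall>s\<in>{0..dist x y}. \<forall>t\<in>{0..dist x y}. dist (\<gamma> s) (\<gamma> t) = \<bar>s - t\<bar>)"

definition geodesic_sp :: "'a::metric_space itself \<Rightarrow> bool" where
  "geodesic_sp T \<longleftrightarrow> (\<forall>x y::'a. \<exists>\<gamma>. geoseg \<gamma> x y)"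

text \<open>Comparison point in the Euclidean plane (complex numbers) on the side [a,b] of length L.\<close>
definition cmp_pt :: "complex \<Rightarrow> complex \<Rightarrow> real \<Rightarrow> real \<Rightarrow> complex" where
  "cmp_pt a b L t = a + complex_of_real (t / L) * (b - a)"

definition side_pairs :: "(real \<Rightarrow> 'a::metric_space) \<Rightarrow> real \<Rightarrow> complex \<Rightarrow> complex \<Rightarrow> ('a \<times> complex) set" where
  "side_pairs \<gamma> L a b = {(\<gamma> t, cmp_pt a b L t) | t. 0 \<le> t \<and> t \<le> L}"

definition CAT0 :: "'a::metric_space itself \<Rightarrow> bool" where
  "CAT0 T \<longleftrightarrow> geodesic_sp T \<and>
    (\<forall>(x::'a) y z \<gamma>1 \<gamma>2 \<gamma>3 a b c.
       geoseg \<gamma>1 x y \<and> geoseg \<gamma>2 y z \<and> geoseg \<gamma>3 z x \<and>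
       dist a b = dist x y \<and> dist b c = dist y z \<and> dist c a = dist z x \<longrightarrow>
       (let S = side_pairs \<gamma>1 (dist x y) a b \<union> side_pairs \<gamma>2 (dist y z) b c
                \<union> side_pairs \<gamma>3 (dist z x) c a
        in \<forall>(p, p')\<in>S. \<forall>(q, q')\<in>S. dist p q \<le> dist p' q'))"

text \<open>Geodesic rays (only values on [0,\<infinity>) matter), asymptoticity, visual boundary.\<close>
definition geo_ray :: "(real \<Rightarrow> 'a::metric_space) \<Rightarrow> bool" where
  "geo_ray c \<longleftrightarrow> (\<forall>s\<ge>0. \<forall>t\<ge>0. dist (c s) (c t) = \<bar>s - t\<bar>)"

definition asymp :: "(real \<Rightarrow> 'a::metric_space) \<Rightarrow> (real \<Rightarrow> 'a) \<Rightarrow> bool" where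
  "asymp c c' \<longleftrightarrow> (\<exists>C. \<forall>t\<ge>0. dist (c t) (c' t) \<le> C)"

definition ray_class :: "(real \<Rightarrow> 'a::metric_space) \<Rightarrow> (real \<Rightarrow> 'a) set" where
  "ray_class c = {c'. geo_ray c' \<and> asymp c c'}"

definition vis_boundary :: "(real \<Rightarrow> 'a::metric_space) set set" where
  "vis_boundary = {ray_class c | c. geo_ray c}"

definition geo_line :: "(real \<Rightarrow> 'a::metric_space) \<Rightarrow> bool" where
  "geo_line c \<longleftrightarrow> (\<forall>s t. dist (c s) (c t) = \<bar>s - t\<bar>)"

definition visibility_pts :: "(real \<Rightarrow> 'a::metric_space) set set" where
  "visibility_pts = {\<xi> \<in> vis_boundary. \<forall>\<eta>\<in>vis_boundary. \<eta> \<noteq> \<xi> \<longrightarrow>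
      (\<exists>c. geo_line c \<and> ray_class c = \<xi> \<and> ray_class (\<lambda>t. c (- t)) = \<eta>)}"

definition vis_basic :: "'a::metric_space \<Rightarrow> (real \<Rightarrow> 'a) set \<Rightarrow> real \<Rightarrow> real \<Rightarrow> (real \<Rightarrow> 'a) set set" where
  "vis_basic x0 \<xi> r \<epsilon> = {\<eta> \<in> vis_boundary. \<exists>c\<in>\<xi>. \<exists>c'\<in>\<eta>.
       c 0 = x0 \<and> c' 0 = x0 \<and> dist (c r) (c' r) < \<epsilon>}"

definition visual_top :: "'a::metric_space \<Rightarrow> (real \<Rightarrow> 'a) set topology" where
  "visual_top x0 = topology_generated_by
     {vis_basic x0 \<xi> r \<epsilon> | \<xi> r \<epsilon>. \<xi> \<in> vis_boundary \<and> r > 0 \<and> \<epsilon> > 0}"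

definition bd_act :: "('a::metric_space \<Rightarrow> 'a) \<Rightarrow> (real \<Rightarrow> 'a) set \<Rightarrow> (real \<Rightarrow> 'a) set" where
  "bd_act f \<xi> = {c'. geo_ray c' \<and> (\<exists>c\<in>\<xi>. asymp (f \<circ> c) c')}"

definition isometry_of :: "('a::metric_space \<Rightarrow> 'a) \<Rightarrow> bool" where
  "isometry_of f \<longleftrightarrow> bij f \<and> (\<forall>x y. dist (f x) (f y) = dist x y)"

definition isom_action :: "('g, 'b) monoid_scheme \<Rightarrow> ('g \<Rightarrow> 'a::metric_space \<Rightarrow> 'a) \<Rightarrow> bool" where
  "isom_action G act \<longleftrightarrow> group G \<and> (\<forall>g\<in>carrier G. isometry_of (act g)) \<and>
     act \<one>\<^bsub>G\<^esub> = id \<and>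
     (\<forall>g\<in>carrier G. \<forall>h\<in>carrier G. act (g \<otimes>\<^bsub>G\<^esub> h) = act g \<circ> act h)"

end

theory Submission
  imports Defs "HOL-Library.Diagonal_Subsequence"
begin

text \<open>Fix \<open>x\<close> and write \<open>y n = g n x\<close>, \<open>z n = (g n)\<inverse> x\<close>. By properness and a diagonal argument,
  along a subsequence the geodesics \<open>[x, y n]\<close> and \<open>[x, z n]\<close> converge to rays; call their
  endpoints \<open>\<xi>p\<close> and \<open>\<xi>m\<close>. Given a visibility point \<open>\<xi> \<noteq> \<xi>m\<close>, let \<open>c\<close> be a geodesic line from \<open>\<xi>m\<close>
  to \<open>\<xi>\<close>. The key estimate is that all geodesics from \<open>z n\<close> to points of \<open>c\<close> pass within a fixed
  distance \<open>R\<close> of \<open>c 0\<close>. Otherwise the projections of \<open>c 0\<close> onto such geodesics see \<open>c\<close> and \<open>z n\<close>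
  under non-acute comparison angles, and in the limit they give a ray \<open>\<alpha>\<close> from \<open>c 0\<close> that stays within
  \<open>sqrt 2 * t\<close> both of \<open>c\<close> and of the ray towards \<open>\<xi>m\<close>. A geodesic line from \<open>\<xi>\<close> to the endpoint of
  \<open>\<alpha>\<close> (by visibility), or \<open>c\<close> itself if \<open>\<alpha>\<close> ends at \<open>\<xi>\<close>, would then have ends at distance
  \<open>sqrt 2 * t + O(1)\<close> instead of \<open>2 * t\<close>. Applying \<open>g n\<close>: the geodesics from any basepoint \<open>x0\<close> to
  points of \<open>g n \<circ> c\<close>, a ray towards \<open>g n \<xi>\<close>, pass within \<open>R\<close> of \<open>g n (c 0)\<close>, which is at bounded
  distance from \<open>y n\<close>. Hence the rays from \<open>x0\<close> towards \<open>g n \<xi>\<close> converge to the ray towards \<open>\<xi>p\<close>.\<close>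

section \<open>Limits and subsequences\<close>

lemma le_of_le_add_divide_large:
  fixes x a b :: real
  assumes "\<And>T. T \<ge> T_min \<Longrightarrow> T > 0 \<Longrightarrow> x \<le> a + b / T"
  shows "x \<le> a"
proof (rule field_le_epsilon)
  fix e :: real
  assume "e > 0"
  define T where "T = max (max T_min 1) (\<bar>b\<bar> / e)"
  have "T > 0" "T \<ge> T_min" "\<bar>b\<bar> / e \<le> T"
    unfolding T_def by auto
  then have "\<bar>b\<bar> \<le> e * T"
    using \<open>e > 0\<close> by (simp add: divide_le_eq mult.commute)
  then have "b / T \<le> e"
    using abs_ge_self[of b] by (subst pos_divide_le_eq[OF \<open>T > 0\<close>]) linarith
  then show "x \<le> a + e"
    using assms[OF \<open>T \<ge> T_min\<close> \<open>T > 0\<close>] by linarith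
qed

lemma tendsto_of_dist_le_divide_large:
  assumes "\<And>T. T \<ge> T_min \<Longrightarrow> T > 0 \<Longrightarrow> eventually (\<lambda>n. dist (f n) l \<le> b / T) F"
  shows "(f \<longlongrightarrow> l) F"
  unfolding tendsto_iff
proof (intro allI impI)
  fix e :: real
  assume "e > 0"
  define T where "T = max (max T_min 1) (2 * \<bar>b\<bar> / e)"
  have "T > 0" "T \<ge> T_min" "2 * \<bar>b\<bar> / e \<le> T"
    unfolding T_def by auto
  then have "2 * \<bar>b\<bar> \<le> e * T"
    using \<open>e > 0\<close> by (simp add: divide_le_eq mult.commute)
  moreover have "e * T > 0"
    using \<open>e > 0\<close> \<open>T > 0\<close> by simp
  ultimately have "b / T < e"
    using abs_ge_self[of b] by (subst pos_divide_less_eq[OF \<open>T > 0\<close>]) linarith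
  then show "eventually (\<lambda>n. dist (f n) l < e) F"
    using assms[OF \<open>T \<ge> T_min\<close> \<open>T > 0\<close>] by (auto elim: eventually_mono)
qed

lemma tendsto_of_dist_le_null:
  fixes f :: "'b \<Rightarrow> 'a::metric_space"
  assumes "(h \<longlongrightarrow> 0) F" and "\<forall>\<^sub>F n in F. dist (f n) l \<le> h n"
  shows "(f \<longlongrightarrow> l) F"
proof (rule metric_tendsto_imp_tendsto[OF assms(1)])
  show "\<forall>\<^sub>F n in F. dist (f n) l \<le> dist (h n) 0"
    using assms(2) by eventually_elim (simp add: dist_real_def)
qed

lemma Cauchy_of_dist_le:
  assumes "Cauchy g" and "\<And>m n. m \<ge> N \<Longrightarrow> n \<ge> N \<Longrightarrow> dist (f m) (f n) \<le> dist (g m) (g n)"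
  shows "Cauchy f"
  unfolding Cauchy_def
proof (intro allI impI)
  fix e :: real
  assume "e > 0"
  then obtain M where M: "\<And>m n. m \<ge> M \<Longrightarrow> n \<ge> M \<Longrightarrow> dist (g m) (g n) < e"
    using assms(1) unfolding Cauchy_def by meson
  show "\<exists>M. \<forall>m\<ge>M. \<forall>n\<ge>M. dist (f m) (f n) < e"
  proof (intro exI allI impI)
    fix m n
    assume "max M N \<le> m" "max M N \<le> n"
    then show "dist (f m) (f n) < e"
      using assms(2)[of m n] M[of m n] by simp
  qed
qed

lemma diagonal_subseq_convergent:
  fixes f :: "nat \<Rightarrow> nat \<Rightarrow> 'a::metric_space"
  assumes "\<And>k. compact (K k)" and "\<And>k n. f k n \<in> K k"
  obtains \<phi> where "strict_mono \<phi>" and "\<And>k. convergent (\<lambda>n. f k (\<phi> n))"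
proof -
  interpret S: subseqs "\<lambda>k s. convergent (\<lambda>n. f k (s n))"
  proof
    fix k :: nat and s :: "nat \<Rightarrow> nat"
    have "seq_compact (K k)"
      using assms(1) by (rule compact_imp_seq_compact)
    moreover have "\<forall>n. f k (s n) \<in> K k"
      using assms(2) by blast
    ultimately obtain l r where "strict_mono (r :: nat \<Rightarrow> nat)" "((\<lambda>n. f k (s n)) \<circ> r) \<longlonglongrightarrow> l"
      by (rule seq_compactE)
    then show "\<exists>r. strict_mono r \<and> convergent (\<lambda>n. f k ((s \<circ> r) n))"
      by (intro exI[of _ r]) (auto simp: convergent_def o_def)
  qed
  have "convergent (\<lambda>n. f k (S.diagseq n))" for k
  proof -
    have "convergent (\<lambda>n. f k ((S.diagseq \<circ> (+) (Suc k)) n))"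
    proof (rule S.diagseq_holds)
      fix r s n
      assume "strict_mono (r :: nat \<Rightarrow> nat)" "convergent (\<lambda>m. f n (s m))"
      then show "convergent (\<lambda>m. f n ((s \<circ> r) m))"
        using convergent_subseq_convergent[of "\<lambda>m. f n (s m)" r] by (simp add: o_def)
    qed
    then obtain l where "(\<lambda>n. f k (S.diagseq (n + Suc k))) \<longlonglongrightarrow> l"
      unfolding convergent_def by (auto simp: o_def add.commute)
    then have "(\<lambda>n. f k (S.diagseq n)) \<longlonglongrightarrow> l"
      by (rule LIMSEQ_offset)
    then show ?thesis
      unfolding convergent_def by blast
  qed
  then show ?thesis
    using that S.subseq_diagseq by blast
qed

lemma dist_at_top_perturb:
  assumes "filterlim (\<lambda>n. dist x (p n)) at_top F" and "\<And>n. dist (p n) (q n) \<le> D"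
  shows "filterlim (\<lambda>n. dist y (q n)) at_top F"
  unfolding filterlim_at_top
proof
  fix Z :: real
  have "\<forall>\<^sub>F n in F. Z + dist x y + D \<le> dist x (p n)"
    using assms(1) unfolding filterlim_at_top by blast
  then show "\<forall>\<^sub>F n in F. Z \<le> dist y (q n)"
  proof eventually_elim
    case (elim n)
    then show ?case
      using assms(2)[of n] dist_triangle[of x "p n" y] dist_triangle[of y "p n" "q n"]
      by (simp add: dist_commute)
  qed
qed

lemma limitin_topology_generated_by:
  assumes "l \<in> \<Union>S" and "\<And>s. s \<in> S \<Longrightarrow> l \<in> s \<Longrightarrow> eventually (\<lambda>x. f x \<in> s) F"
  shows "limitin (topology_generated_by S) f l F"
  unfolding limitin_def
proof (intro conjI allI impI)
  show "l \<in> topspace (topology_generated_by S)"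
    using assms(1) by simp
  fix U
  assume "openin (topology_generated_by S) U \<and> l \<in> U"
  then have "generate_topology_on S U" "l \<in> U"
    by (auto simp: openin_topology_generated_by_iff)
  then show "eventually (\<lambda>x. f x \<in> U) F"
  proof (induction rule: generate_topology_on.induct)
    case (Int a b)
    then show ?case
      by (auto intro: eventually_conj)
  next
    case (UN K)
    then obtain k where "k \<in> K" "l \<in> k"
      by blast
    then show ?case
      using UN.IH by (blast intro: eventually_mono)
  next
    case (Basis s)
    then show ?case
      using assms(2) by blast
  qed simp
qed

lemma proper_sp_Cauchy_convergent:
  assumes "proper_sp TYPE('a::metric_space)" and "Cauchy (f :: nat \<Rightarrow> 'a)"
  shows "convergent f"
proof -
  obtain x :: 'a and r where r: "range f \<subseteq> cball x r"
    using cauchy_imp_bounded[OF assms(2)] bounded_subset_cball by blast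
  have "compact (cball x r)"
    using assms(1) unfolding proper_sp_def by blast
  then have "complete (cball x r)"
    by (rule compact_imp_complete)
  then show ?thesis
    using r assms(2) unfolding complete_def convergent_def by blast
qed

lemma proper_sp_escaping_dist_at_top:
  assumes "proper_sp TYPE('a::metric_space)" and "\<And>K. compact K \<Longrightarrow> \<forall>\<^sub>F n in F. p n \<notin> K"
  shows "filterlim (\<lambda>n. dist (x::'a) (p n)) at_top F"
  unfolding filterlim_at_top
proof
  fix Z :: real
  have "\<forall>\<^sub>F n in F. p n \<notin> cball x Z"
    using assms unfolding proper_sp_def by blast
  then show "\<forall>\<^sub>F n in F. Z \<le> dist x (p n)"
    by eventually_elim simp
qed

section \<open>Geodesics\<close>

definition some_geoseg :: "'a::metric_space \<Rightarrow> 'a \<Rightarrow> real \<Rightarrow> 'a" where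
  "some_geoseg x y = (SOME \<gamma>. geoseg \<gamma> x y)"

lemma CAT0_imp_geodesic_sp: "CAT0 TYPE('a::metric_space) \<Longrightarrow> geodesic_sp TYPE('a)"
  unfolding CAT0_def by blast

lemma geoseg_some_geoseg:
  assumes "geodesic_sp TYPE('a::metric_space)"
  shows "geoseg (some_geoseg x y) x (y::'a)"
  using assms unfolding geodesic_sp_def some_geoseg_def by (metis someI_ex)

lemma geoseg_dist:
  "geoseg \<gamma> x y \<Longrightarrow> s \<in> {0..dist x y} \<Longrightarrow> t \<in> {0..dist x y} \<Longrightarrow> dist (\<gamma> s) (\<gamma> t) = \<bar>s - t\<bar>"
  unfolding geoseg_def by blast

lemma geoseg_start: "geoseg \<gamma> x y \<Longrightarrow> \<gamma> 0 = x"
  and geoseg_end: "geoseg \<gamma> x y \<Longrightarrow> \<gamma> (dist x y) = y"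
  unfolding geoseg_def by auto

lemma geoseg_dist_start:
  assumes "geoseg \<gamma> x y" "s \<in> {0..dist x y}"
  shows "dist x (\<gamma> s) = s"
  using geoseg_dist[OF assms(1), of 0 s] assms by (auto simp: geoseg_start)

lemma geoseg_dist_end:
  assumes "geoseg \<gamma> x y" "s \<in> {0..dist x y}"
  shows "dist (\<gamma> s) y = dist x y - s"
  using geoseg_dist[OF assms(1), of s "dist x y"] assms by (auto simp: geoseg_end)

lemma geoseg_restrict:
  assumes "geoseg \<gamma> x y" "s \<in> {0..dist x y}"
  shows "geoseg \<gamma> x (\<gamma> s)"
  using assms geoseg_dist_start[OF assms] unfolding geoseg_def by auto

lemma geoseg_shift:
  assumes "geoseg \<gamma> x y" "s \<in> {0..dist x y}"
  shows "geoseg (\<lambda>t. \<gamma> (s + t)) (\<gamma> s) y"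
  using assms geoseg_dist_end[OF assms] unfolding geoseg_def by auto

lemma geoseg_reverse:
  assumes "geoseg \<gamma> x y"
  shows "geoseg (\<lambda>t. \<gamma> (dist x y - t)) y x"
  using assms unfolding geoseg_def by (auto simp: dist_commute abs_minus_commute)

lemma geoseg_isometric_image:
  assumes "geoseg \<gamma> x y" "\<And>a b. dist (f a) (f b) = dist a b"
  shows "geoseg (f \<circ> \<gamma>) (f x) (f y)"
  using assms unfolding geoseg_def by auto

lemma continuous_on_geoseg:
  assumes "geoseg \<gamma> x y"
  shows "continuous_on {0..dist x y} \<gamma>"
  unfolding continuous_on_iff
  using geoseg_dist[OF assms] by (metis dist_real_def)

lemma geoseg_closest_point:
  fixes xo :: "'a::metric_space"
  assumes "geoseg \<gamma> a b"
  obtains s where "s \<in> {0..dist a b}" "\<And>\<tau>. \<tau> \<in> {0..dist a b} \<Longrightarrow> dist xo (\<gamma> s) \<le> dist xo (\<gamma> \<tau>)"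
proof -
  have "continuous_on {0..dist a b} (\<lambda>s. dist xo (\<gamma> s))"
    by (intro continuous_on_dist continuous_on_const continuous_on_geoseg[OF assms])
  then have "\<exists>s\<in>{0..dist a b}. \<forall>\<tau>\<in>{0..dist a b}. dist xo (\<gamma> s) \<le> dist xo (\<gamma> \<tau>)"
    by (intro continuous_attains_inf) auto
  then show ?thesis
    using that by blast
qed

lemma geo_ray_dist_start: "geo_ray \<rho> \<Longrightarrow> 0 \<le> T \<Longrightarrow> dist (\<rho> 0) (\<rho> T) = T"
  unfolding geo_ray_def by force

lemma geoseg_geo_ray:
  assumes "geo_ray \<rho>" "0 \<le> T"
  shows "geoseg \<rho> (\<rho> 0) (\<rho> T)"
  using assms geo_ray_dist_start[OF assms] unfolding geoseg_def geo_ray_def by auto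

lemma geo_ray_isometric_image:
  "(\<And>a b. dist (f a) (f b) = dist a b) \<Longrightarrow> geo_ray \<rho> \<Longrightarrow> geo_ray (f \<circ> \<rho>)"
  unfolding geo_ray_def by simp

lemma geo_line_imp_geo_ray: "geo_line c \<Longrightarrow> geo_ray c"
  unfolding geo_line_def geo_ray_def by auto

lemma geo_line_dist_opposite: "geo_line c \<Longrightarrow> 0 \<le> t \<Longrightarrow> dist (c t) (c (- t)) = 2 * t"
  unfolding geo_line_def by simp

section \<open>CAT(0) comparison\<close>

lemma comparison_triangle_exists:
  fixes A B C :: real
  assumes "A > 0" "B \<ge> 0" "C \<ge> 0" "C \<le> A + B" "A \<le> B + C" "B \<le> A + C"
  obtains c :: complex where "cmod c = B" "cmod (complex_of_real A - c) = C"
proof -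
  define u where "u = (A\<^sup>2 + B\<^sup>2 - C\<^sup>2) / (2 * A)"
  have "(2 * A * u)\<^sup>2 \<le> (2 * A * B)\<^sup>2"
  proof -
    have "(2 * A * B)\<^sup>2 - (2 * A * u)\<^sup>2 = (C - A + B) * (C + A - B) * ((A + B - C) * (A + B + C))"
      using assms(1) unfolding u_def by (simp add: field_simps power2_eq_square)
    also have "\<dots> \<ge> 0"
      using assms by (intro mult_nonneg_nonneg) auto
    finally show ?thesis by simp
  qed
  then have u2: "u\<^sup>2 \<le> B\<^sup>2"
    using assms(1) by (simp add: power_mult_distrib)
  define v where "v = sqrt (B\<^sup>2 - u\<^sup>2)"
  have v2: "v\<^sup>2 = B\<^sup>2 - u\<^sup>2"
    unfolding v_def using u2 by simp
  show ?thesis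
  proof
    show "cmod (Complex u v) = B"
      using v2 assms(2) by (simp add: cmod_def)
    have "(cmod (complex_of_real A - Complex u v))\<^sup>2 = C\<^sup>2"
      using v2 assms(1) unfolding cmod_power2 u_def
      by (simp add: field_simps power2_eq_square)
    then show "cmod (complex_of_real A - Complex u v) = C"
      using assms(3) by (simp add: power2_eq_iff_nonneg)
  qed
qed

lemma side_pairsI: "t \<in> {0..L} \<Longrightarrow> (\<gamma> t, cmp_pt a b L t) \<in> side_pairs \<gamma> L a b"
  unfolding side_pairs_def by auto

lemma CAT0_comparison:
  fixes x y z :: "'a::metric_space"
  assumes cat: "CAT0 TYPE('a)" and sides: "geoseg \<gamma>1 x y" "geoseg \<gamma>2 y z" "geoseg \<gamma>3 z x"
    and cmp: "dist a b = dist x y" "dist b c = dist y z" "dist c a = dist z x"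
    and p: "(p, p') \<in> side_pairs \<gamma>1 (dist x y) a b" and q: "(q, q') \<in> side_pairs \<gamma>3 (dist z x) c a"
  shows "dist p q \<le> dist p' q'"
proof -
  have "\<forall>(p, p')\<in>side_pairs \<gamma>1 (dist x y) a b \<union> side_pairs \<gamma>2 (dist y z) b c \<union> side_pairs \<gamma>3 (dist z x) c a.
        \<forall>(q, q')\<in>side_pairs \<gamma>1 (dist x y) a b \<union> side_pairs \<gamma>2 (dist y z) b c \<union> side_pairs \<gamma>3 (dist z x) c a.
          dist p q \<le> dist p' q'"
    using cat[unfolded CAT0_def, THEN conjunct2, rule_format, of \<gamma>1 x y \<gamma>2 z \<gamma>3 a b c] sides cmp
    unfolding Let_def by simp
  then show ?thesis
    using p q by blast
qed

lemma cmod_of_real_diff_scaled_power2: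
  assumes "cmod c = B" and "B > 0"
  shows "(cmod (complex_of_real s - complex_of_real (t / B) * c))\<^sup>2 = s\<^sup>2 + t\<^sup>2 - s * t * (2 * Re c) / B"
proof -
  have "(cmod (complex_of_real s - complex_of_real (t / B) * c))\<^sup>2 = (s - t / B * Re c)\<^sup>2 + (t / B * Im c)\<^sup>2"
    unfolding cmod_power2 by simp
  also have "\<dots> = s\<^sup>2 - 2 * s * (t / B) * Re c + (t / B)\<^sup>2 * (cmod c)\<^sup>2"
    unfolding cmod_power2 by (simp add: power2_eq_square algebra_simps)
  also have "\<dots> = s\<^sup>2 + t\<^sup>2 - s * t * (2 * Re c) / B"
    using assms by (simp add: field_simps power2_eq_square)
  finally show ?thesis .
qed

text \<open>The bound is the squared distance of the comparison points, computed by the law of cosines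
  in the Euclidean comparison triangle.\<close>

lemma CAT0_law_of_cosines:
  fixes x y z :: "'a::metric_space"
  assumes cat: "CAT0 TYPE('a)" and \<gamma>: "geoseg \<gamma> x y" and \<delta>: "geoseg \<delta> x z"
    and A: "dist x y > 0" and B: "dist x z > 0"
    and s: "s \<in> {0..dist x y}" and t: "t \<in> {0..dist x z}"
  shows "(dist (\<gamma> s) (\<delta> t))\<^sup>2 \<le>
    s\<^sup>2 + t\<^sup>2 - s * t * ((dist x y)\<^sup>2 + (dist x z)\<^sup>2 - (dist y z)\<^sup>2) / (dist x y * dist x z)"
proof -
  define A B C where "A = dist x y" and "B = dist x z" and "C = dist y z"
  obtain c where c: "cmod c = B" "cmod (complex_of_real A - c) = C"
    using comparison_triangle_exists[of A B C] A
    unfolding A_def B_def C_def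
    by (metis dist_commute dist_triangle dist_triangle2 zero_le_dist)
  have "B\<^sup>2 = (Re c)\<^sup>2 + (Im c)\<^sup>2" and "C\<^sup>2 = (A - Re c)\<^sup>2 + (Im c)\<^sup>2"
    using c cmod_power2[of c] cmod_power2[of "complex_of_real A - c"] by auto
  then have Re_c: "2 * A * Re c = A\<^sup>2 + B\<^sup>2 - C\<^sup>2"
    by (simp add: power2_eq_square algebra_simps)
  have side: "geoseg (some_geoseg y z) y z"
    using geoseg_some_geoseg[OF CAT0_imp_geodesic_sp[OF cat]] .
  have reversed: "geoseg (\<lambda>\<tau>. \<delta> (B - \<tau>)) z x"
    using geoseg_reverse[OF \<delta>] unfolding B_def .
  have cmp: "dist 0 (complex_of_real A) = dist x y" "dist (complex_of_real A) c = dist y z"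
    "dist c 0 = dist z x"
    using A c unfolding A_def B_def C_def by (simp_all add: dist_norm dist_commute)
  have "(\<gamma> s, cmp_pt 0 (complex_of_real A) A s) \<in> side_pairs \<gamma> (dist x y) 0 (complex_of_real A)"
    using side_pairsI[OF s] unfolding A_def .
  moreover have "(\<delta> t, cmp_pt c 0 B (B - t)) \<in> side_pairs (\<lambda>\<tau>. \<delta> (B - \<tau>)) (dist z x) c 0"
    using side_pairsI[of "B - t" "dist z x" "\<lambda>\<tau>. \<delta> (B - \<tau>)"] t
    unfolding B_def by (simp add: dist_commute)
  ultimately have "dist (\<gamma> s) (\<delta> t) \<le> dist (cmp_pt 0 (complex_of_real A) A s) (cmp_pt c 0 B (B - t))"
    by (rule CAT0_comparison[OF cat \<gamma> side reversed cmp])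
  also have "cmp_pt 0 (complex_of_real A) A s = complex_of_real s"
    using A unfolding cmp_pt_def A_def by (simp flip: of_real_mult of_real_divide)
  also have "cmp_pt c 0 B (B - t) = complex_of_real (t / B) * c"
    using B unfolding cmp_pt_def B_def by (simp add: diff_divide_distrib algebra_simps)
  finally have "(dist (\<gamma> s) (\<delta> t))\<^sup>2 \<le> (cmod (complex_of_real s - complex_of_real (t / B) * c))\<^sup>2"
    by (simp add: dist_norm power_mono)
  also have "\<dots> = s\<^sup>2 + t\<^sup>2 - s * t * (2 * A * Re c) / (A * B)"
    using cmod_of_real_diff_scaled_power2[OF c(1)] A B unfolding A_def B_def by simp
  finally show ?thesis
    using Re_c unfolding A_def B_def C_def by simp
qed

lemma CAT0_geoseg_convex:
  fixes p q1 q2 :: "'a::metric_space"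
  assumes cat: "CAT0 TYPE('a)" and \<gamma>1: "geoseg \<gamma>1 p q1" and \<gamma>2: "geoseg \<gamma>2 p q2"
    and l: "l \<in> {0..1}"
  shows "dist (\<gamma>1 (l * dist p q1)) (\<gamma>2 (l * dist p q2)) \<le> l * dist q1 q2"
proof (cases "q1 = p \<or> q2 = p")
  case True
  have "dist p (\<gamma> (l * dist p q)) = l * dist p q" if "geoseg \<gamma> p q" for \<gamma> and q :: 'a
    using geoseg_dist_start[OF that] l by (simp add: mult_left_le_one_le)
  then show ?thesis
    using True \<gamma>1 \<gamma>2 geoseg_start[OF \<gamma>1] geoseg_start[OF \<gamma>2] by (auto simp: dist_commute)
next
  case False
  define A B C where "A = dist p q1" and "B = dist p q2" and "C = dist q1 q2"
  have pos: "A > 0" "B > 0"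
    using False unfolding A_def B_def by auto
  have "(dist (\<gamma>1 (l * A)) (\<gamma>2 (l * B)))\<^sup>2 \<le> (l * A)\<^sup>2 + (l * B)\<^sup>2 - l * A * (l * B) * (A\<^sup>2 + B\<^sup>2 - C\<^sup>2) / (A * B)"
    using CAT0_law_of_cosines[OF cat \<gamma>1 \<gamma>2, of "l * A" "l * B"] pos l
    unfolding A_def B_def C_def by (simp add: mult_left_le_one_le)
  also have "\<dots> = (l * C)\<^sup>2"
    using pos by (simp add: field_simps power2_eq_square)
  finally show ?thesis
    using l unfolding A_def B_def C_def by (auto intro: power2_le_imp_le)
qed

lemma CAT0_non_acute_dist_le_sqrt2:
  fixes x y z :: "'a::metric_space"
  assumes cat: "CAT0 TYPE('a)" and \<gamma>: "geoseg \<gamma> x y" and \<delta>: "geoseg \<delta> x z"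
    and non_acute: "(dist x y)\<^sup>2 + (dist y z)\<^sup>2 \<le> (dist x z)\<^sup>2" and t: "t \<in> {0..dist x y}"
  shows "dist (\<gamma> t) (\<delta> t) \<le> sqrt 2 * t"
proof (cases "x = y")
  case True
  then show ?thesis
    using t geoseg_start[OF \<gamma>] geoseg_start[OF \<delta>] by simp
next
  case False
  define A B C where "A = dist x y" and "B = dist x z" and "C = dist y z"
  have "A\<^sup>2 \<le> B\<^sup>2"
    using non_acute zero_le_power2[of C] unfolding A_def B_def C_def by linarith
  then have "A \<le> B"
    unfolding A_def B_def by (simp add: power2_le_iff_abs_le)
  moreover have A: "A > 0"
    using False unfolding A_def by simp
  ultimately have B: "B > 0"
    by simp
  have "(dist (\<gamma> t) (\<delta> t))\<^sup>2 \<le> t\<^sup>2 + t\<^sup>2 - t * t * (A\<^sup>2 + B\<^sup>2 - C\<^sup>2) / (A * B)"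
    using CAT0_law_of_cosines[OF cat \<gamma> \<delta>, of t t] t A B \<open>A \<le> B\<close> unfolding A_def B_def C_def by simp
  also have "\<dots> \<le> 2 * t\<^sup>2"
  proof -
    have "A\<^sup>2 + B\<^sup>2 - C\<^sup>2 \<ge> 0"
      using non_acute zero_le_power2[of A] unfolding A_def B_def C_def by linarith
    then have "t * t * (A\<^sup>2 + B\<^sup>2 - C\<^sup>2) / (A * B) \<ge> 0"
      using A B by simp
    then show ?thesis
      by (simp add: power2_eq_square)
  qed
  finally have "dist (\<gamma> t) (\<delta> t) \<le> sqrt (2 * t\<^sup>2)"
    by (rule real_le_rsqrt)
  then show ?thesis
    using t by (simp add: real_sqrt_mult)
qed

text \<open>If the comparison angle at \<open>p\<close> were acute, moving from \<open>p\<close> towards \<open>w\<close> would decrease the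
  distance to \<open>xo\<close>.\<close>

lemma CAT0_closest_point_non_acute:
  fixes xo p w :: "'a::metric_space"
  assumes cat: "CAT0 TYPE('a)" and \<gamma>: "geoseg \<gamma> p w"
    and closest: "\<And>\<tau>. \<tau> \<in> {0..dist p w} \<Longrightarrow> dist xo p \<le> dist xo (\<gamma> \<tau>)"
  shows "(dist xo p)\<^sup>2 + (dist p w)\<^sup>2 \<le> (dist xo w)\<^sup>2"
proof (cases "p = xo \<or> p = w")
  case True
  then show ?thesis by auto
next
  case False
  define A B C where "A = dist p xo" and "B = dist p w" and "C = dist xo w"
  define k where "k = (A\<^sup>2 + B\<^sup>2 - C\<^sup>2) / (A * B)"
  have pos: "A > 0" "B > 0"
    using False unfolding A_def B_def by auto
  show ?thesis
  proof (rule ccontr)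
    assume "\<not> ?thesis"
    then have "k > 0"
      using pos unfolding k_def A_def B_def C_def by (simp add: dist_commute)
    define \<tau> where "\<tau> = min B (A * k / 2)"
    have \<tau>: "\<tau> > 0" "\<tau> \<le> B" "\<tau> \<le> A * k / 2"
      using pos \<open>k > 0\<close> unfolding \<tau>_def by auto
    have to_xo: "geoseg (some_geoseg p xo) p xo"
      by (rule geoseg_some_geoseg[OF CAT0_imp_geodesic_sp[OF cat]])
    have "(dist (some_geoseg p xo A) (\<gamma> \<tau>))\<^sup>2 \<le> A\<^sup>2 + \<tau>\<^sup>2 - A * \<tau> * k"
      using CAT0_law_of_cosines[OF cat to_xo \<gamma>, of A \<tau>] pos \<tau>
      unfolding k_def A_def B_def C_def by (simp add: dist_commute)
    also have "\<dots> < A\<^sup>2"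
    proof -
      have "\<tau> * \<tau> < \<tau> * (A * k)"
        using \<tau> pos \<open>k > 0\<close> by simp
      then show ?thesis
        by (simp add: power2_eq_square algebra_simps)
    qed
    finally have "dist xo (\<gamma> \<tau>) < dist xo p"
      using geoseg_end[OF to_xo] pos unfolding A_def
      by (auto simp: dist_commute intro: power2_less_imp_less)
    then show False
      using closest[of \<tau>] \<tau> unfolding B_def by simp
  qed
qed

text \<open>\<open>p\<close> is a point of \<open>[a, b]\<close> closest to \<open>xo\<close>; it sees \<open>xo\<close> and either end under a non-acute
  comparison angle.\<close>

lemma CAT0_closest_point_sqrt2:
  fixes xo a b :: "'a::metric_space"
  assumes cat: "CAT0 TYPE('a)" and \<gamma>: "geoseg \<gamma> a b"
  obtains p where "p \<in> \<gamma> ` {0..dist a b}"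
    and "\<And>w \<rho> t. w \<in> {a, b} \<Longrightarrow> geoseg \<rho> xo w \<Longrightarrow> t \<in> {0..dist xo p} \<Longrightarrow>
      dist (some_geoseg xo p t) (\<rho> t) \<le> sqrt 2 * t"
proof -
  obtain s where s: "s \<in> {0..dist a b}"
    and closest: "\<And>\<tau>. \<tau> \<in> {0..dist a b} \<Longrightarrow> dist xo (\<gamma> s) \<le> dist xo (\<gamma> \<tau>)"
    using geoseg_closest_point[OF \<gamma>] by blast
  define p where "p = \<gamma> s"
  have to_a: "geoseg (\<lambda>\<tau>. \<gamma> (s - \<tau>)) p a"
    using geoseg_reverse[OF geoseg_restrict[OF \<gamma> s]] geoseg_dist_start[OF \<gamma> s]
    unfolding p_def by simp
  have to_b: "geoseg (\<lambda>\<tau>. \<gamma> (s + \<tau>)) p b"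
    using geoseg_shift[OF \<gamma> s] unfolding p_def .
  have dist_p: "dist p a = s" "dist p b = dist a b - s"
    using geoseg_dist_start[OF \<gamma> s] geoseg_dist_end[OF \<gamma> s] unfolding p_def
    by (simp_all add: dist_commute)
  have "(dist xo p)\<^sup>2 + (dist p a)\<^sup>2 \<le> (dist xo a)\<^sup>2"
    by (rule CAT0_closest_point_non_acute[OF cat to_a])
      (use closest s dist_p in \<open>auto simp: p_def\<close>)
  moreover have "(dist xo p)\<^sup>2 + (dist p b)\<^sup>2 \<le> (dist xo b)\<^sup>2"
    by (rule CAT0_closest_point_non_acute[OF cat to_b])
      (use closest s dist_p in \<open>auto simp: p_def\<close>)
  ultimately have non_acute: "(dist xo p)\<^sup>2 + (dist p w)\<^sup>2 \<le> (dist xo w)\<^sup>2" if "w \<in> {a, b}" for w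
    using that by blast
  have to_p: "geoseg (some_geoseg xo p) xo p"
    by (rule geoseg_some_geoseg[OF CAT0_imp_geodesic_sp[OF cat]])
  show ?thesis
  proof (rule that)
    show "p \<in> \<gamma> ` {0..dist a b}"
      using s unfolding p_def by blast
    fix w \<rho> t
    assume "w \<in> {a, b}" and \<rho>: "geoseg \<rho> xo w" and t: "t \<in> {0..dist xo p}"
    then show "dist (some_geoseg xo p t) (\<rho> t) \<le> sqrt 2 * t"
      using CAT0_non_acute_dist_le_sqrt2[OF cat to_p \<rho> non_acute t] by blast
  qed
qed

lemma CAT0_geosegs_dist_mono:
  fixes x p1 p2 :: "'a::metric_space"
  assumes cat: "CAT0 TYPE('a)" and \<gamma>1: "geoseg \<gamma>1 x p1" and \<gamma>2: "geoseg \<gamma>2 x p2"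
    and t: "t \<in> {0..k}" and k: "k \<le> dist x p1" "k \<le> dist x p2"
  shows "dist (\<gamma>1 t) (\<gamma>2 t) \<le> dist (\<gamma>1 k) (\<gamma>2 k)"
proof (cases "k = 0")
  case True
  then show ?thesis
    using t by simp
next
  case False
  have k1: "k \<in> {0..dist x p1}" and k2: "k \<in> {0..dist x p2}" and l: "t / k \<in> {0..1}"
    using t k False by auto
  have "dist (\<gamma>1 (t / k * k)) (\<gamma>2 (t / k * k)) \<le> t / k * dist (\<gamma>1 k) (\<gamma>2 k)"
    using CAT0_geoseg_convex[OF cat geoseg_restrict[OF \<gamma>1 k1] geoseg_restrict[OF \<gamma>2 k2] l]
    unfolding geoseg_dist_start[OF \<gamma>1 k1] geoseg_dist_start[OF \<gamma>2 k2] .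
  also have "\<dots> \<le> dist (\<gamma>1 k) (\<gamma>2 k)"
    using l by (intro mult_left_le_one_le) auto
  finally show ?thesis
    using False by simp
qed

lemma CAT0_geosegs_close:
  fixes x0 p1 p2 :: "'a::metric_space"
  assumes cat: "CAT0 TYPE('a)" and \<gamma>1: "geoseg \<gamma>1 x0 p1" and \<gamma>2: "geoseg \<gamma>2 x0 p2"
    and "x0 \<noteq> p1" and \<delta>: "dist p1 p2 \<le> \<delta>" and t: "t \<in> {0..dist x0 p1}" "t \<le> dist x0 p2"
  shows "dist (\<gamma>1 t) (\<gamma>2 t) \<le> 2 * t * \<delta> / dist x0 p1"
proof -
  define l where "l = t / dist x0 p1"
  have l: "l \<in> {0..1}" and lt: "l * dist x0 p1 = t"
    using t \<open>x0 \<noteq> p1\<close> unfolding l_def by auto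
  have "dist (\<gamma>1 t) (\<gamma>2 (l * dist x0 p2)) \<le> l * dist p1 p2"
    using CAT0_geoseg_convex[OF cat \<gamma>1 \<gamma>2 l] lt by simp
  also have "\<dots> \<le> l * \<delta>"
    using \<delta> l by (simp add: mult_left_mono)
  finally have along: "dist (\<gamma>1 t) (\<gamma>2 (l * dist x0 p2)) \<le> l * \<delta>" .
  have "dist (\<gamma>2 (l * dist x0 p2)) (\<gamma>2 t) = \<bar>l * dist x0 p2 - l * dist x0 p1\<bar>"
    using geoseg_dist[OF \<gamma>2, of "l * dist x0 p2" t] l t lt by (simp add: mult_left_le_one_le)
  also have "\<dots> = l * \<bar>dist x0 p2 - dist x0 p1\<bar>"
    using l by (simp add: abs_mult flip: right_diff_distrib)
  also have "\<dots> \<le> l * \<delta>"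
    using \<delta> l dist_triangle3[of x0 p2 p1] dist_triangle[of x0 p1 p2]
    by (intro mult_left_mono) (auto simp: dist_commute)
  finally have "dist (\<gamma>1 t) (\<gamma>2 t) \<le> l * \<delta> + l * \<delta>"
    using along dist_triangle[of "\<gamma>1 t" "\<gamma>2 t" "\<gamma>2 (l * dist x0 p2)"] by linarith
  then show ?thesis
    unfolding l_def by (simp add: mult_ac)
qed

lemma CAT0_geo_ray_geoseg_close:
  fixes x0 w :: "'a::metric_space"
  assumes cat: "CAT0 TYPE('a)" and \<rho>: "geo_ray \<rho>" "\<rho> 0 = x0" and \<sigma>: "geoseg \<sigma> x0 w"
    and C: "dist (\<rho> T) w \<le> C" and T: "T > 0" and t: "t \<in> {0..T}" "t \<le> dist x0 w"
  shows "dist (\<rho> t) (\<sigma> t) \<le> 2 * t * C / T"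
  using CAT0_geosegs_close[OF cat geoseg_geo_ray[OF \<rho>(1) less_imp_le[OF T], unfolded \<rho>(2)] \<sigma>, of C t]
    geo_ray_dist_start[OF \<rho>(1), of T] \<rho>(2) C T t
  by fastforce

text \<open>Convexity of the distance, applied to both geodesics reversed so that they issue from \<open>w\<close>.\<close>

lemma CAT0_geosegs_common_end:
  fixes x0 x w :: "'a::metric_space"
  assumes cat: "CAT0 TYPE('a)" and \<sigma>: "geoseg \<sigma> x0 w" and \<sigma>': "geoseg \<sigma>' x w"
    and T: "T \<in> {0..dist x w}"
  shows "\<exists>s\<in>{0..dist x0 w}. T - dist x0 x \<le> s \<and> dist (\<sigma> s) (\<sigma>' T) \<le> dist x0 x"
proof (cases "x = w")
  case True
  then show ?thesis
    using T geoseg_end[OF \<sigma>] geoseg_start[OF \<sigma>'] by (intro bexI[of _ "dist x0 w"]) auto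
next
  case False
  define L L0 D where "L = dist x w" and "L0 = dist x0 w" and "D = dist x0 x"
  define l where "l = (L - T) / L"
  have L: "L > 0"
    using False unfolding L_def by simp
  have l: "l \<in> {0..1}"
    using T L unfolding l_def L_def by auto
  have "dist (\<sigma> (L0 - l * L0)) (\<sigma>' (L - l * L)) \<le> l * D"
    using CAT0_geoseg_convex[OF cat geoseg_reverse[OF \<sigma>] geoseg_reverse[OF \<sigma>'] l]
    unfolding L_def L0_def D_def by (simp add: dist_commute)
  moreover have "L - l * L = T" "L0 - l * L0 = T * L0 / L"
    using L unfolding l_def by (simp_all add: field_simps)
  moreover have "l * D \<le> D"
    using l unfolding D_def by (simp add: mult_left_le_one_le)
  ultimately have close: "dist (\<sigma> (T * L0 / L)) (\<sigma>' T) \<le> D"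
    by simp
  have "T * L0 / L \<in> {0..L0}"
  proof -
    have "T * L0 \<le> L * L0"
      using T unfolding L0_def L_def by (intro mult_right_mono) auto
    then show ?thesis
      using T L unfolding L0_def L_def by (auto simp: pos_divide_le_eq mult.commute)
  qed
  moreover have "T - D \<le> T * L0 / L"
  proof -
    have "T * (L - D) \<le> T * L0"
      using T dist_triangle[of x w x0] unfolding L_def L0_def D_def
      by (intro mult_left_mono) (auto simp: dist_commute)
    moreover have "T * D \<le> L * D"
      using T unfolding L_def D_def by (intro mult_right_mono) auto
    ultimately show ?thesis
      using L by (simp add: field_simps)
  qed
  ultimately show ?thesis
    using close unfolding L0_def D_def by blast
qed

lemma CAT0_geo_ray_geoseg_close_via_base:
  fixes x0 x w :: "'a::metric_space"
  assumes cat: "CAT0 TYPE('a)" and \<beta>: "geo_ray \<beta>" "\<beta> 0 = x0"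
    and \<sigma>: "geoseg \<sigma> x0 w" and \<sigma>': "geoseg \<sigma>' x w"
    and T: "T \<in> {0..dist x w}" "T > 0" and K: "dist (\<beta> T) (\<sigma>' T) \<le> K"
    and t: "t \<in> {0..T - dist x0 x}"
  shows "dist (\<beta> t) (\<sigma> t) \<le> 2 * t * (K + dist x0 x) / T"
proof -
  obtain s where s: "s \<in> {0..dist x0 w}" "T - dist x0 x \<le> s"
    and near: "dist (\<sigma> s) (\<sigma>' T) \<le> dist x0 x"
    using CAT0_geosegs_common_end[OF cat \<sigma> \<sigma>' T(1)] by blast
  have "dist (\<beta> T) (\<sigma> s) \<le> K + dist x0 x"
    using K near dist_triangle[of "\<beta> T" "\<sigma> s" "\<sigma>' T"] by (simp add: dist_commute)
  moreover have "t \<in> {0..T}" "t \<le> dist x0 (\<sigma> s)"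
    using t s geoseg_dist_start[OF \<sigma> s(1)] zero_le_dist[of x0 x] by (auto simp del: zero_le_dist)
  ultimately show ?thesis
    by (rule CAT0_geo_ray_geoseg_close[OF cat \<beta> geoseg_restrict[OF \<sigma> s(1)] _ T(2)])
qed

lemma CAT0_geoseg_to_geo_ray_close:
  fixes x0 :: "'a::metric_space"
  assumes cat: "CAT0 TYPE('a)" and \<gamma>: "geo_ray \<gamma>" and \<sigma>: "geoseg \<sigma> x0 (\<gamma> T)"
    and \<tau>: "\<tau> \<in> {0..T}" "\<tau> \<le> dist x0 (\<gamma> T)"
  shows "dist (\<sigma> \<tau>) (\<gamma> \<tau>) \<le> 3 * dist x0 (\<gamma> 0)"
proof -
  define D where "D = dist x0 (\<gamma> 0)"
  have "T \<ge> 0"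
    using \<tau> by simp
  obtain s where s: "s \<in> {0..dist x0 (\<gamma> T)}" "\<tau> - D \<le> s" and near: "dist (\<sigma> s) (\<gamma> \<tau>) \<le> D"
    using CAT0_geosegs_common_end[OF cat \<sigma> geoseg_geo_ray[OF \<gamma> \<open>T \<ge> 0\<close>], of \<tau>] \<tau>
      geo_ray_dist_start[OF \<gamma> \<open>T \<ge> 0\<close>] unfolding D_def by auto
  have "s \<le> \<tau> + 2 * D"
    using geoseg_dist_start[OF \<sigma> s(1)] near geo_ray_dist_start[OF \<gamma>, of \<tau>] \<tau>
      dist_triangle[of x0 "\<sigma> s" "\<gamma> \<tau>"] dist_triangle[of x0 "\<gamma> \<tau>" "\<gamma> 0"] unfolding D_def
    by (auto simp: dist_commute)
  then have "dist (\<sigma> \<tau>) (\<sigma> s) \<le> 2 * D"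
    using geoseg_dist[OF \<sigma>, of \<tau> s] s \<tau> by auto
  then show ?thesis
    using near dist_triangle[of "\<sigma> \<tau>" "\<gamma> \<tau>" "\<sigma> s"] unfolding D_def by linarith
qed

lemma CAT0_geo_rays_asymp_eq:
  fixes \<rho>1 \<rho>2 :: "real \<Rightarrow> 'a::metric_space"
  assumes cat: "CAT0 TYPE('a)" and \<rho>: "geo_ray \<rho>1" "geo_ray \<rho>2" "\<rho>1 0 = \<rho>2 0"
    and "asymp \<rho>1 \<rho>2" and t: "t \<ge> 0"
  shows "\<rho>1 t = \<rho>2 t"
proof -
  obtain C where C: "\<And>T. T \<ge> 0 \<Longrightarrow> dist (\<rho>1 T) (\<rho>2 T) \<le> C"
    using \<open>asymp \<rho>1 \<rho>2\<close> unfolding asymp_def by blast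
  have "dist (\<rho>1 t) (\<rho>2 t) \<le> 0 + t * C / T" if "T \<ge> t" "T > 0" for T
  proof -
    have l: "t / T \<in> {0..1}"
      using that t by auto
    have "T \<ge> 0"
      using that by simp
    have dT: "dist (\<rho>1 0) (\<rho>1 T) = T" "dist (\<rho>1 0) (\<rho>2 T) = T"
      using geo_ray_dist_start[OF \<rho>(1) \<open>T \<ge> 0\<close>] geo_ray_dist_start[OF \<rho>(2) \<open>T \<ge> 0\<close>] \<rho>(3)
      by simp_all
    have "dist (\<rho>1 t) (\<rho>2 t) \<le> t / T * dist (\<rho>1 T) (\<rho>2 T)"
      using CAT0_geoseg_convex[OF cat geoseg_geo_ray[OF \<rho>(1) \<open>T \<ge> 0\<close>]
          geoseg_geo_ray[OF \<rho>(2) \<open>T \<ge> 0\<close>, folded \<rho>(3)] l] that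
      unfolding dT by simp
    also have "\<dots> \<le> t / T * C"
      using C[of T] that t by (intro mult_left_mono) auto
    finally show ?thesis
      using that by simp
  qed
  then have "dist (\<rho>1 t) (\<rho>2 t) \<le> 0"
    by (rule le_of_le_add_divide_large)
  then show ?thesis
    by simp
qed

section \<open>Sequences converging to boundary points\<close>

text \<open>Convergence of \<open>p n\<close> to the endpoint of \<open>\<rho>\<close> in the cone topology on \<open>X \<union> \<partial>X\<close>. Beyond its
  endpoint \<open>some_geoseg x (p n)\<close> is unspecified; the divergence of \<open>p n\<close> makes this irrelevant.\<close>

definition converges_to_ray :: "'a::metric_space \<Rightarrow> (nat \<Rightarrow> 'a) \<Rightarrow> (real \<Rightarrow> 'a) \<Rightarrow> bool" where
  "converges_to_ray x p \<rho> \<longleftrightarrow> filterlim (\<lambda>n. dist x (p n)) at_top sequentially \<and>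
     (\<forall>t\<ge>0. (\<lambda>n. some_geoseg x (p n) t) \<longlonglongrightarrow> \<rho> t)"

lemma converges_to_rayD:
  "converges_to_ray x p \<rho> \<Longrightarrow> filterlim (\<lambda>n. dist x (p n)) at_top sequentially"
  "converges_to_ray x p \<rho> \<Longrightarrow> t \<ge> 0 \<Longrightarrow> (\<lambda>n. some_geoseg x (p n) t) \<longlonglongrightarrow> \<rho> t"
  unfolding converges_to_ray_def by auto

lemma converges_to_ray_geo_ray:
  assumes geod: "geodesic_sp TYPE('a::metric_space)" and conv: "converges_to_ray (x::'a) p \<rho>"
  shows "geo_ray \<rho>" and "\<rho> 0 = x"
proof -
  have far: "\<forall>\<^sub>F n in sequentially. T \<le> dist x (p n)" for T
    using converges_to_rayD(1)[OF conv] unfolding filterlim_at_top by blast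
  note sg = geoseg_some_geoseg[OF geod]
  show "geo_ray \<rho>"
    unfolding geo_ray_def
  proof (intro allI impI)
    fix s t :: real
    assume st: "s \<ge> 0" "t \<ge> 0"
    have "\<forall>\<^sub>F n in sequentially. dist (some_geoseg x (p n) s) (some_geoseg x (p n) t) = \<bar>s - t\<bar>"
      using far[of "s + t"] by eventually_elim (use st in \<open>auto intro!: geoseg_dist[OF sg]\<close>)
    then have "((\<lambda>n. dist (some_geoseg x (p n) s) (some_geoseg x (p n) t)) \<longlongrightarrow> \<bar>s - t\<bar>) sequentially"
      by (rule tendsto_eventually)
    moreover have "((\<lambda>n. dist (some_geoseg x (p n) s) (some_geoseg x (p n) t)) \<longlongrightarrow> dist (\<rho> s) (\<rho> t)) sequentially"
      using st by (intro tendsto_dist converges_to_rayD(2)[OF conv])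
    ultimately show "dist (\<rho> s) (\<rho> t) = \<bar>s - t\<bar>"
      using LIMSEQ_unique by blast
  qed
  have "(\<lambda>n. some_geoseg x (p n) 0) \<longlonglongrightarrow> x"
    using geoseg_start[OF sg] by simp
  then show "\<rho> 0 = x"
    using converges_to_rayD(2)[OF conv, of 0] LIMSEQ_unique by auto
qed

lemma converges_to_ray_compose:
  assumes "converges_to_ray x p \<rho>" "strict_mono \<phi>"
  shows "converges_to_ray x (p \<circ> \<phi>) \<rho>"
  using assms filterlim_compose[OF _ filterlim_subseq] LIMSEQ_subseq_LIMSEQ
  unfolding converges_to_ray_def by (fastforce simp: o_def)

lemma CAT0_converges_to_ray_subseq:
  fixes x :: "'a::metric_space" and p :: "nat \<Rightarrow> 'a"
  assumes cat: "CAT0 TYPE('a)" and pr: "proper_sp TYPE('a)"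
    and far: "filterlim (\<lambda>n. dist x (p n)) at_top sequentially"
  obtains \<phi> \<rho> where "strict_mono \<phi>" and "converges_to_ray x (p \<circ> \<phi>) \<rho>"
proof -
  note sg = geoseg_some_geoseg[OF CAT0_imp_geodesic_sp[OF cat]]
  define f where "f k n = some_geoseg x (p n) (min (real k) (dist x (p n)))" for k n
  have mem: "f k n \<in> cball x (real k)" for k n
    using geoseg_dist_start[OF sg, of "min (real k) (dist x (p n))" x "p n"] unfolding f_def by simp
  have compact: "compact (cball x (real k))" for k
    using pr unfolding proper_sp_def by blast
  obtain \<phi> where \<phi>: "strict_mono \<phi>" and conv: "\<And>k. convergent (\<lambda>n. f k (\<phi> n))"
    using diagonal_subseq_convergent[of "\<lambda>k. cball x (real k)" f, OF compact mem] by blast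
  have far\<phi>: "filterlim (\<lambda>n. dist x (p (\<phi> n))) at_top sequentially"
    using filterlim_compose[OF far filterlim_subseq[OF \<phi>]] .
  have "convergent (\<lambda>n. some_geoseg x (p (\<phi> n)) t)" if t: "t \<ge> 0" for t
  proof -
    obtain k :: nat where k: "t \<le> real k"
      using real_arch_simple by blast
    obtain N where N: "\<And>n. n \<ge> N \<Longrightarrow> real k \<le> dist x (p (\<phi> n))"
      using far\<phi> unfolding filterlim_at_top eventually_sequentially by blast
    have "Cauchy (\<lambda>n. some_geoseg x (p (\<phi> n)) t)"
    proof (rule Cauchy_of_dist_le[OF convergent_Cauchy[OF conv[of k]]])
      fix m n
      assume "m \<ge> N" "n \<ge> N"
      then have "real k \<le> dist x (p (\<phi> m))" "real k \<le> dist x (p (\<phi> n))"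
        using N by auto
      then show "dist (some_geoseg x (p (\<phi> m)) t) (some_geoseg x (p (\<phi> n)) t) \<le> dist (f k (\<phi> m)) (f k (\<phi> n))"
        using CAT0_geosegs_dist_mono[OF cat sg sg] t k unfolding f_def by (simp add: min_absorb1)
    qed
    then show ?thesis
      by (rule proper_sp_Cauchy_convergent[OF pr])
  qed
  then have "converges_to_ray x (p \<circ> \<phi>) (\<lambda>t. lim (\<lambda>n. some_geoseg x (p (\<phi> n)) t))"
    using far\<phi> unfolding converges_to_ray_def by (simp add: convergent_LIMSEQ_iff)
  then show ?thesis
    using that \<phi> by blast
qed

lemma CAT0_asymp_geo_ray_from:
  fixes x0 :: "'a::metric_space"
  assumes cat: "CAT0 TYPE('a)" and pr: "proper_sp TYPE('a)" and \<gamma>: "geo_ray \<gamma>"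
  obtains \<rho> where "geo_ray \<rho>" and "\<rho> 0 = x0" and "asymp \<gamma> \<rho>"
proof -
  note geod = CAT0_imp_geodesic_sp[OF cat]
  define D where "D = dist x0 (\<gamma> 0)"
  have "filterlim (\<lambda>n. dist (\<gamma> 0) (\<gamma> (real n))) at_top sequentially"
    using filterlim_real_sequentially by (simp add: geo_ray_dist_start[OF \<gamma>])
  then have far: "filterlim (\<lambda>n. dist x0 (\<gamma> (real n))) at_top sequentially"
    by (rule dist_at_top_perturb[where D = 0]) simp
  obtain \<phi> \<rho> where conv: "converges_to_ray x0 ((\<lambda>n. \<gamma> (real n)) \<circ> \<phi>) \<rho>"
    using CAT0_converges_to_ray_subseq[OF cat pr far] by blast
  have "dist (\<gamma> t) (\<rho> t) \<le> 3 * D" if t: "t \<ge> 0" for t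
  proof (rule tendsto_upperbound)
    show "((\<lambda>n. dist (\<gamma> t) (some_geoseg x0 (\<gamma> (real (\<phi> n))) t)) \<longlongrightarrow> dist (\<gamma> t) (\<rho> t)) sequentially"
      using converges_to_rayD(2)[OF conv t] by (intro tendsto_intros) (simp add: o_def)
    have "\<forall>\<^sub>F n in sequentially. t + D \<le> dist x0 (\<gamma> (real (\<phi> n)))"
      using converges_to_rayD(1)[OF conv] unfolding filterlim_at_top by (simp add: o_def)
    then show "\<forall>\<^sub>F n in sequentially. dist (\<gamma> t) (some_geoseg x0 (\<gamma> (real (\<phi> n))) t) \<le> 3 * D"
    proof eventually_elim
      case (elim n)
      have "t \<le> real (\<phi> n)"
        using elim dist_triangle[of x0 "\<gamma> (real (\<phi> n))" "\<gamma> 0"] geo_ray_dist_start[OF \<gamma>, of "real (\<phi> n)"]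
        unfolding D_def by (simp add: dist_commute)
      moreover have "t \<le> dist x0 (\<gamma> (real (\<phi> n)))"
        using elim zero_le_dist[of x0 "\<gamma> 0"] unfolding D_def by linarith
      ultimately show ?case
        using CAT0_geoseg_to_geo_ray_close[OF cat \<gamma> geoseg_some_geoseg[OF geod]] t
        unfolding D_def by (simp add: dist_commute)
    qed
  qed simp
  then have "asymp \<gamma> \<rho>"
    unfolding asymp_def by blast
  then show ?thesis
    using that converges_to_ray_geo_ray[OF geod conv] by blast
qed

lemma CAT0_converges_to_ray_perturb:
  fixes x :: "'a::metric_space"
  assumes cat: "CAT0 TYPE('a)" and conv: "converges_to_ray x p \<rho>"
    and D: "\<And>n. dist (p n) (q n) \<le> D"
  shows "converges_to_ray x q \<rho>"
  unfolding converges_to_ray_def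
proof (intro conjI allI impI)
  note sg = geoseg_some_geoseg[OF CAT0_imp_geodesic_sp[OF cat]]
  have far_p: "filterlim (\<lambda>n. dist x (p n)) at_top sequentially"
    using converges_to_rayD(1)[OF conv] .
  show far_q: "filterlim (\<lambda>n. dist x (q n)) at_top sequentially"
    using dist_at_top_perturb[OF far_p D] .
  fix t :: real
  assume t: "t \<ge> 0"
  show "(\<lambda>n. some_geoseg x (q n) t) \<longlonglongrightarrow> \<rho> t"
  proof (rule tendsto_of_dist_le_null)
    have "(\<lambda>n. 2 * t * D / dist x (p n)) \<longlonglongrightarrow> 0"
      by (rule tendsto_divide_0[OF tendsto_const filterlim_at_top_imp_at_infinity[OF far_p]])
    moreover have "(\<lambda>n. dist (some_geoseg x (p n) t) (\<rho> t)) \<longlonglongrightarrow> 0"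
      using converges_to_rayD(2)[OF conv t] by (rule tendsto_dist_iff[THEN iffD1])
    ultimately show "(\<lambda>n. 2 * t * D / dist x (p n) + dist (some_geoseg x (p n) t) (\<rho> t)) \<longlonglongrightarrow> 0"
      by (rule tendsto_add_zero)
    have "\<forall>\<^sub>F n in sequentially. t + 1 \<le> dist x (p n)" "\<forall>\<^sub>F n in sequentially. t \<le> dist x (q n)"
      using far_p far_q unfolding filterlim_at_top by blast+
    then show "\<forall>\<^sub>F n in sequentially.
        dist (some_geoseg x (q n) t) (\<rho> t) \<le> 2 * t * D / dist x (p n) + dist (some_geoseg x (p n) t) (\<rho> t)"
    proof eventually_elim
      case (elim n)
      then have "x \<noteq> p n" "t \<in> {0..dist x (p n)}"
        using t by auto
      then have "dist (some_geoseg x (p n) t) (some_geoseg x (q n) t) \<le> 2 * t * D / dist x (p n)"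
        using CAT0_geosegs_close[OF cat sg sg _ D] elim(2) by simp
      then show ?case
        using dist_triangle3[of "some_geoseg x (q n) t" "\<rho> t" "some_geoseg x (p n) t"] by linarith
    qed
  qed
qed

lemma CAT0_converges_to_ray_basepoint:
  fixes x x0 :: "'a::metric_space"
  assumes cat: "CAT0 TYPE('a)" and conv: "converges_to_ray x p \<rho>"
    and \<beta>: "geo_ray \<beta>" "\<beta> 0 = x0" and "asymp \<rho> \<beta>"
  shows "converges_to_ray x0 p \<beta>"
  unfolding converges_to_ray_def
proof (intro conjI allI impI)
  note sg = geoseg_some_geoseg[OF CAT0_imp_geodesic_sp[OF cat]]
  obtain C where C: "\<And>T. T \<ge> 0 \<Longrightarrow> dist (\<rho> T) (\<beta> T) \<le> C"
    using \<open>asymp \<rho> \<beta>\<close> unfolding asymp_def by blast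
  define D where "D = dist x0 x"
  have far: "filterlim (\<lambda>n. dist x (p n)) at_top sequentially"
    using converges_to_rayD(1)[OF conv] .
  show "filterlim (\<lambda>n. dist x0 (p n)) at_top sequentially"
    by (rule dist_at_top_perturb[OF far, where D = 0]) simp
  fix t :: real
  assume t: "t \<ge> 0"
  show "(\<lambda>n. some_geoseg x0 (p n) t) \<longlonglongrightarrow> \<beta> t"
  proof (rule tendsto_of_dist_le_divide_large[where T_min = "t + D" and b = "2 * t * (C + 1 + D)"])
    fix T :: real
    assume T: "T \<ge> t + D" "T > 0"
    have "\<forall>\<^sub>F n in sequentially. T \<le> dist x (p n)"
      using far unfolding filterlim_at_top by blast
    moreover have "\<forall>\<^sub>F n in sequentially. dist (some_geoseg x (p n) T) (\<rho> T) < 1"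
      using converges_to_rayD(2)[OF conv, of T] T t zero_le_dist[of x0 x]
      unfolding tendsto_iff D_def by simp
    ultimately show "\<forall>\<^sub>F n in sequentially. dist (some_geoseg x0 (p n) t) (\<beta> t) \<le> 2 * t * (C + 1 + D) / T"
    proof eventually_elim
      case (elim n)
      have "dist (\<beta> T) (some_geoseg x (p n) T) \<le> C + 1"
        using elim(2) C[of T] T(2) dist_triangle[of "\<beta> T" "some_geoseg x (p n) T" "\<rho> T"]
        by (simp add: dist_commute)
      moreover have "T \<in> {0..dist x (p n)}" "t \<in> {0..T - D}"
        using elim(1) T t by auto
      ultimately show ?case
        using CAT0_geo_ray_geoseg_close_via_base[OF cat \<beta> sg sg] T(2)
        unfolding D_def by (simp add: dist_commute)
    qed
  qed
qed

lemma CAT0_converges_to_ray_rebase: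
  fixes x x0 :: "'a::metric_space"
  assumes cat: "CAT0 TYPE('a)" and pr: "proper_sp TYPE('a)" and conv: "converges_to_ray x p \<rho>"
    and D: "\<And>n. dist (p n) (q n) \<le> D"
  obtains \<beta> where "asymp \<rho> \<beta>" and "converges_to_ray x0 q \<beta>"
proof -
  obtain \<beta> where \<beta>: "geo_ray \<beta>" "\<beta> 0 = x0" "asymp \<rho> \<beta>"
    using CAT0_asymp_geo_ray_from[OF cat pr converges_to_ray_geo_ray(1)[OF CAT0_imp_geodesic_sp[OF cat] conv]]
    by blast
  then show ?thesis
    using that CAT0_converges_to_ray_basepoint[OF cat CAT0_converges_to_ray_perturb[OF cat conv D]] by blast
qed

section \<open>Asymptotic rays and visibility\<close>

lemma asymp_refl: "asymp c c"
  unfolding asymp_def by (auto intro: exI[of _ 0])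

lemma asymp_sym: "asymp a b \<Longrightarrow> asymp b a"
  unfolding asymp_def by (auto simp: dist_commute)

lemma asymp_trans:
  assumes "asymp a b" and "asymp b c"
  shows "asymp a c"
proof -
  obtain C1 C2 where "\<And>t. t \<ge> 0 \<Longrightarrow> dist (a t) (b t) \<le> C1" "\<And>t. t \<ge> 0 \<Longrightarrow> dist (b t) (c t) \<le> C2"
    using assms unfolding asymp_def by blast
  then have "dist (a t) (c t) \<le> C1 + C2" if "t \<ge> 0" for t
    using dist_triangle[of "a t" "c t" "b t"] that by fastforce
  then show ?thesis
    unfolding asymp_def by blast
qed

lemma asymp_isometric_image:
  "(\<And>a b. dist (f a) (f b) = dist a b) \<Longrightarrow> asymp a b \<Longrightarrow> asymp (f \<circ> a) (f \<circ> b)"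
  unfolding asymp_def by simp

lemma asymp_imp_ray_class_eq:
  assumes "asymp a b"
  shows "ray_class a = ray_class b"
  using asymp_trans[OF assms] asymp_trans[OF asymp_sym[OF assms]] unfolding ray_class_def by blast

lemma ray_class_eq_imp_asymp: "ray_class a = ray_class b \<Longrightarrow> geo_ray b \<Longrightarrow> asymp a b"
  unfolding ray_class_def using asymp_refl by blast

lemma ray_class_self: "geo_ray c \<Longrightarrow> c \<in> ray_class c"
  unfolding ray_class_def using asymp_refl by blast

lemma ray_class_in_vis_boundary: "geo_ray c \<Longrightarrow> ray_class c \<in> vis_boundary"
  unfolding vis_boundary_def by blast

text \<open>The points \<open>l t\<close> and \<open>l (- t)\<close> are \<open>2 * t\<close> apart, but joined through \<open>a t\<close> and \<open>b t\<close> by a path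
  of length \<open>sqrt 2 * t + O(1)\<close>.\<close>

lemma geo_line_ends_not_sqrt2_close:
  assumes l: "geo_line l" and "asymp l a" and "asymp b (\<lambda>t. l (- t))"
    and close: "\<And>t. t \<ge> 0 \<Longrightarrow> dist (a t) (b t) \<le> sqrt 2 * t"
  shows False
proof -
  obtain C1 C2 where C1: "\<And>t. t \<ge> 0 \<Longrightarrow> dist (l t) (a t) \<le> C1"
    and C2: "\<And>t. t \<ge> 0 \<Longrightarrow> dist (b t) (l (- t)) \<le> C2"
    using \<open>asymp l a\<close> \<open>asymp b (\<lambda>t. l (- t))\<close> unfolding asymp_def by blast
  define X where "X = \<bar>C1\<bar> + \<bar>C2\<bar> + 1"
  define t where "t = 4 * X"
  have t: "t \<ge> 0"
    unfolding t_def X_def by simp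
  have "sqrt 2 < sqrt ((3 / 2) ^ 2)"
    by (rule real_sqrt_less_mono) (simp add: power2_eq_square)
  then have "sqrt 2 * t \<le> 3 / 2 * t"
    using t by (intro mult_right_mono) auto
  moreover have "2 * t \<le> C1 + sqrt 2 * t + C2"
    using geo_line_dist_opposite[OF l t] C1[OF t] close[OF t] C2[OF t]
      dist_triangle[of "l t" "l (- t)" "a t"] dist_triangle[of "a t" "l (- t)" "b t"] by linarith
  moreover have "C1 + C2 < 2 * X"
    unfolding X_def by auto
  ultimately show False
    unfolding t_def by linarith
qed

lemma visibility_no_sqrt2_ray:
  assumes c: "geo_line c" and vis: "ray_class c \<in> visibility_pts" and \<alpha>: "geo_ray \<alpha>"
    and \<beta>: "asymp \<beta> (\<lambda>t. c (- t))"
    and \<alpha>c: "\<And>t. t \<ge> 0 \<Longrightarrow> dist (\<alpha> t) (c t) \<le> sqrt 2 * t"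
    and \<alpha>\<beta>: "\<And>t. t \<ge> 0 \<Longrightarrow> dist (\<alpha> t) (\<beta> t) \<le> sqrt 2 * t"
  shows False
proof (cases "ray_class \<alpha> = ray_class c")
  case True
  then have "asymp c \<alpha>"
    using ray_class_eq_imp_asymp[OF _ \<alpha>] by simp
  then show False
    using geo_line_ends_not_sqrt2_close[OF c _ \<beta> \<alpha>\<beta>] by blast
next
  case False
  then have "\<exists>l. geo_line l \<and> ray_class l = ray_class c \<and> ray_class (\<lambda>t. l (- t)) = ray_class \<alpha>"
    using vis ray_class_in_vis_boundary[OF \<alpha>] unfolding visibility_pts_def by blast
  then obtain l where l: "geo_line l" "ray_class l = ray_class c" "ray_class (\<lambda>t. l (- t)) = ray_class \<alpha>"
    by blast
  have "asymp l c"
    using ray_class_eq_imp_asymp[OF l(2) geo_line_imp_geo_ray[OF c]] .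
  moreover have "asymp \<alpha> (\<lambda>t. l (- t))"
    using asymp_sym[OF ray_class_eq_imp_asymp[OF l(3) \<alpha>]] .
  moreover have "dist (c t) (\<alpha> t) \<le> sqrt 2 * t" if "t \<ge> 0" for t
    using \<alpha>c[OF that] by (simp add: dist_commute)
  ultimately show False
    using geo_line_ends_not_sqrt2_close[OF l(1)] by blast
qed

definition geodesics_pass_near :: "'a::metric_space \<Rightarrow> 'a \<Rightarrow> 'a \<Rightarrow> real \<Rightarrow> bool" where
  "geodesics_pass_near a b p R \<longleftrightarrow> (\<forall>\<gamma>. geoseg \<gamma> a b \<longrightarrow> (\<exists>s\<in>{0..dist a b}. dist (\<gamma> s) p \<le> R))"

lemma CAT0_far_geodesic_projection:
  fixes c :: "real \<Rightarrow> 'a::metric_space"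
  assumes cat: "CAT0 TYPE('a)" and c: "geo_ray c" and T: "T \<ge> 0"
    and far: "\<not> geodesics_pass_near z (c T) (c 0) R"
  shows "\<exists>p. R < dist (c 0) p \<and> (\<forall>t\<in>{0..dist (c 0) p}.
    dist (some_geoseg (c 0) p t) (c t) \<le> sqrt 2 * t \<and>
    dist (some_geoseg (c 0) p t) (some_geoseg (c 0) z t) \<le> sqrt 2 * t)"
proof -
  obtain \<gamma> where \<gamma>: "geoseg \<gamma> z (c T)" and far_\<gamma>: "\<And>s. s \<in> {0..dist z (c T)} \<Longrightarrow> R < dist (\<gamma> s) (c 0)"
    using far unfolding geodesics_pass_near_def by (auto simp: not_le)
  obtain p where p: "p \<in> \<gamma> ` {0..dist z (c T)}"
    and close: "\<And>w \<rho> t. w \<in> {z, c T} \<Longrightarrow> geoseg \<rho> (c 0) w \<Longrightarrow> t \<in> {0..dist (c 0) p} \<Longrightarrow>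
      dist (some_geoseg (c 0) p t) (\<rho> t) \<le> sqrt 2 * t"
    using CAT0_closest_point_sqrt2[OF cat \<gamma>] by blast
  have "R < dist (c 0) p"
    using p far_\<gamma> by (auto simp: dist_commute)
  moreover have "dist (some_geoseg (c 0) p t) (c t) \<le> sqrt 2 * t"
    and "dist (some_geoseg (c 0) p t) (some_geoseg (c 0) z t) \<le> sqrt 2 * t"
    if "t \<in> {0..dist (c 0) p}" for t
    using close[OF _ geoseg_geo_ray[OF c T] that] close[OF _ geoseg_some_geoseg[OF CAT0_imp_geodesic_sp[OF cat]] that]
    by simp_all
  ultimately show ?thesis
    by blast
qed

text \<open>\<open>\<alpha>\<close> is a limit of the geodesics from \<open>c 0\<close> to its projections onto the far geodesics.\<close>

lemma CAT0_sqrt2_ray_of_far_geodesics: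
  fixes c :: "real \<Rightarrow> 'a::metric_space" and z :: "nat \<Rightarrow> 'a" and m :: "nat \<Rightarrow> nat"
  assumes cat: "CAT0 TYPE('a)" and pr: "proper_sp TYPE('a)" and c: "geo_line c"
    and z: "converges_to_ray (c 0) z \<beta>" and m: "filterlim m at_top sequentially"
    and T: "\<And>k. T k \<ge> 0" and far: "\<And>k. \<not> geodesics_pass_near (z (m k)) (c (T k)) (c 0) (real k)"
  obtains \<alpha> where "geo_ray \<alpha>"
    and "\<And>t. t \<ge> 0 \<Longrightarrow> dist (\<alpha> t) (c t) \<le> sqrt 2 * t"
    and "\<And>t. t \<ge> 0 \<Longrightarrow> dist (\<alpha> t) (\<beta> t) \<le> sqrt 2 * t"
proof -
  note geod = CAT0_imp_geodesic_sp[OF cat]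
  have "\<forall>k. \<exists>p. real k < dist (c 0) p \<and> (\<forall>t\<in>{0..dist (c 0) p}.
      dist (some_geoseg (c 0) p t) (c t) \<le> sqrt 2 * t \<and>
      dist (some_geoseg (c 0) p t) (some_geoseg (c 0) (z (m k)) t) \<le> sqrt 2 * t)"
    using CAT0_far_geodesic_projection[OF cat geo_line_imp_geo_ray[OF c] T far] by blast
  then obtain P where P: "\<forall>k. real k < dist (c 0) (P k) \<and> (\<forall>t\<in>{0..dist (c 0) (P k)}.
      dist (some_geoseg (c 0) (P k) t) (c t) \<le> sqrt 2 * t \<and>
      dist (some_geoseg (c 0) (P k) t) (some_geoseg (c 0) (z (m k)) t) \<le> sqrt 2 * t)"
    by (rule choice[THEN exE])
  then have "filterlim (\<lambda>k. dist (c 0) (P k)) at_top sequentially"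
    by (intro filterlim_at_top_mono[OF filterlim_real_sequentially] always_eventually allI less_imp_le)
      blast
  then obtain \<phi> \<alpha> where \<phi>: "strict_mono \<phi>" and conv: "converges_to_ray (c 0) (P \<circ> \<phi>) \<alpha>"
    by (rule CAT0_converges_to_ray_subseq[OF cat pr])
  have eventually_in: "\<forall>\<^sub>F n in sequentially. t \<in> {0..dist (c 0) (P (\<phi> n))}" if "t \<ge> 0" for t
    using converges_to_rayD(1)[OF conv] that unfolding filterlim_at_top by (simp add: o_def)
  have lim: "(\<lambda>n. some_geoseg (c 0) (P (\<phi> n)) t) \<longlonglongrightarrow> \<alpha> t" if "t \<ge> 0" for t
    using converges_to_rayD(2)[OF conv that] by (simp add: o_def)
  show ?thesis
  proof (rule that)
    show "geo_ray \<alpha>"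
      using converges_to_ray_geo_ray[OF geod conv] by blast
    fix t :: real
    assume t: "t \<ge> 0"
    show "dist (\<alpha> t) (c t) \<le> sqrt 2 * t"
      using tendsto_upperbound[OF tendsto_dist[OF lim[OF t] tendsto_const]]
        eventually_mono[OF eventually_in[OF t]] P by simp
    have "filterlim (m \<circ> \<phi>) at_top sequentially"
      using filterlim_compose[OF m filterlim_subseq[OF \<phi>]] by (simp add: o_def)
    then have "(\<lambda>n. some_geoseg (c 0) (z (m (\<phi> n))) t) \<longlonglongrightarrow> \<beta> t"
      using filterlim_compose[OF converges_to_rayD(2)[OF z t]] by (simp add: o_def)
    then show "dist (\<alpha> t) (\<beta> t) \<le> sqrt 2 * t"
      using tendsto_upperbound[OF tendsto_dist[OF lim[OF t]]]
        eventually_mono[OF eventually_in[OF t]] P by simp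
  qed
qed

lemma CAT0_geodesics_to_line_pass_near:
  fixes c :: "real \<Rightarrow> 'a::metric_space" and z :: "nat \<Rightarrow> 'a"
  assumes cat: "CAT0 TYPE('a)" and pr: "proper_sp TYPE('a)" and c: "geo_line c"
    and vis: "ray_class c \<in> visibility_pts"
    and z: "converges_to_ray (c 0) z \<beta>" and \<beta>: "asymp \<beta> (\<lambda>t. c (- t))"
  shows "\<exists>R. \<forall>\<^sub>F n in sequentially. \<forall>T\<ge>0. geodesics_pass_near (z n) (c T) (c 0) R"
proof (rule ccontr)
  assume "\<not> ?thesis"
  then have "\<forall>k. \<exists>n\<ge>k. \<exists>T\<ge>0. \<not> geodesics_pass_near (z n) (c T) (c 0) (real k)"
    unfolding eventually_sequentially by blast
  then obtain m where m: "\<forall>k. m k \<ge> k \<and> (\<exists>T\<ge>0. \<not> geodesics_pass_near (z (m k)) (c T) (c 0) (real k))"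
    by (rule choice[THEN exE])
  then have "\<forall>k. \<exists>T. T \<ge> 0 \<and> \<not> geodesics_pass_near (z (m k)) (c T) (c 0) (real k)"
    by blast
  then obtain T where T: "\<forall>k. T k \<ge> 0 \<and> \<not> geodesics_pass_near (z (m k)) (c (T k)) (c 0) (real k)"
    by (rule choice[THEN exE])
  have m_far: "filterlim m at_top sequentially"
    using m by (intro filterlim_at_top_mono[OF filterlim_ident] always_eventually) auto
  have "\<And>k. T k \<ge> 0" and far: "\<And>k. \<not> geodesics_pass_near (z (m k)) (c (T k)) (c 0) (real k)"
    using T by blast+
  then obtain \<alpha> where "geo_ray \<alpha>" "\<And>t. t \<ge> 0 \<Longrightarrow> dist (\<alpha> t) (c t) \<le> sqrt 2 * t"
    "\<And>t. t \<ge> 0 \<Longrightarrow> dist (\<alpha> t) (\<beta> t) \<le> sqrt 2 * t"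
    using CAT0_sqrt2_ray_of_far_geodesics[OF cat pr c z m_far] by blast
  then show False
    using visibility_no_sqrt2_ray[OF c vis _ \<beta>] by blast
qed

section \<open>Isometries and the visual topology\<close>

lemma isometry_of_dist: "isometry_of f \<Longrightarrow> dist (f x) (f y) = dist x y"
  unfolding isometry_of_def by blast

lemma isometry_of_inv_apply:
  assumes "isometry_of f"
  shows "inv_into UNIV f (f x) = x" and "f (inv_into UNIV f x) = x"
  using assms unfolding isometry_of_def by (auto simp: bij_def surj_f_inv_f)

lemma isometry_of_inv:
  assumes "isometry_of f"
  shows "isometry_of (inv_into UNIV f)"
  unfolding isometry_of_def
proof
  show "bij (inv_into UNIV f)"
    using assms unfolding isometry_of_def by (simp add: bij_imp_bij_inv)
  show "\<forall>x y. dist (inv_into UNIV f x) (inv_into UNIV f y) = dist x y"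
    using isometry_of_dist[OF assms] isometry_of_inv_apply[OF assms] by metis
qed

lemma geodesics_pass_near_isometry:
  assumes f: "isometry_of f" and near: "geodesics_pass_near a b p R"
  shows "geodesics_pass_near (f a) (f b) (f p) R"
  unfolding geodesics_pass_near_def
proof (intro allI impI)
  fix \<gamma>
  assume "geoseg \<gamma> (f a) (f b)"
  then have "geoseg (inv_into UNIV f \<circ> \<gamma>) a b"
    using geoseg_isometric_image[of \<gamma> "f a" "f b" "inv_into UNIV f"] isometry_of_dist[OF isometry_of_inv[OF f]]
    by (simp add: isometry_of_inv_apply[OF f])
  then obtain s where "s \<in> {0..dist a b}" "dist (inv_into UNIV f (\<gamma> s)) p \<le> R"
    using near unfolding geodesics_pass_near_def by auto
  then show "\<exists>s\<in>{0..dist (f a) (f b)}. dist (\<gamma> s) (f p) \<le> R"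
    using isometry_of_dist[OF f, of "inv_into UNIV f (\<gamma> s)" p] isometry_of_dist[OF f, of a b]
    by (auto simp: isometry_of_inv_apply[OF f] intro!: bexI[of _ s])
qed

lemma bd_act_ray_class:
  assumes f: "\<And>a b. dist (f a) (f b) = dist a b" and c: "geo_ray c" and "asymp (f \<circ> c) \<rho>"
  shows "bd_act f (ray_class c) = ray_class \<rho>"
proof
  show "bd_act f (ray_class c) \<subseteq> ray_class \<rho>"
  proof
    fix c'
    assume "c' \<in> bd_act f (ray_class c)"
    then obtain c1 where c': "geo_ray c'" "asymp (f \<circ> c1) c'" and "asymp c c1"
      unfolding bd_act_def ray_class_def by blast
    then have "asymp \<rho> c'"
      using asymp_trans[OF asymp_sym[OF \<open>asymp (f \<circ> c) \<rho>\<close>]]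
        asymp_trans[OF asymp_isometric_image[OF f \<open>asymp c c1\<close>]] by blast
    then show "c' \<in> ray_class \<rho>"
      using c' unfolding ray_class_def by simp
  qed
  show "ray_class \<rho> \<subseteq> bd_act f (ray_class c)"
  proof
    fix c'
    assume "c' \<in> ray_class \<rho>"
    then have "geo_ray c'" "asymp (f \<circ> c) c'"
      using asymp_trans[OF \<open>asymp (f \<circ> c) \<rho>\<close>] unfolding ray_class_def by auto
    then show "c' \<in> bd_act f (ray_class c)"
      using c asymp_refl unfolding bd_act_def ray_class_def by blast
  qed
qed

lemma CAT0_limitin_visual_top:
  fixes x0 :: "'a::metric_space"
  assumes cat: "CAT0 TYPE('a)" and \<rho>: "\<And>n. geo_ray (\<rho> n)" "\<And>n. \<rho> n 0 = x0"
    and \<eta>: "geo_ray \<eta>" "\<eta> 0 = x0"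
    and conv: "\<And>r. r > 0 \<Longrightarrow> (\<lambda>n. \<rho> n r) \<longlonglongrightarrow> \<eta> r"
  shows "limitin (visual_top x0) (\<lambda>n. ray_class (\<rho> n)) (ray_class \<eta>) sequentially"
  unfolding visual_top_def
proof (rule limitin_topology_generated_by)
  have "ray_class \<eta> \<in> vis_basic x0 (ray_class \<eta>) 1 1"
    using ray_class_in_vis_boundary[OF \<eta>(1)] ray_class_self[OF \<eta>(1)] \<eta>(2)
    unfolding vis_basic_def by (auto intro!: bexI[of _ \<eta>])
  then show "ray_class \<eta> \<in> \<Union>{vis_basic x0 \<xi> r \<epsilon> | \<xi> r \<epsilon>. \<xi> \<in> vis_boundary \<and> r > 0 \<and> \<epsilon> > 0}"
    by (rule UnionI[rotated]) (use ray_class_in_vis_boundary[OF \<eta>(1)] in \<open>auto intro!: exI[of _ 1]\<close>)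
next
  fix s
  assume "s \<in> {vis_basic x0 \<xi> r \<epsilon> | \<xi> r \<epsilon>. \<xi> \<in> vis_boundary \<and> r > 0 \<and> \<epsilon> > 0}"
  then obtain \<zeta> r \<epsilon> where s: "s = vis_basic x0 \<zeta> r \<epsilon>" and "r > 0"
    by blast
  assume "ray_class \<eta> \<in> s"
  then obtain c1 c2 where c1: "c1 \<in> \<zeta>" "c1 0 = x0" and c2: "c2 \<in> ray_class \<eta>" "c2 0 = x0"
    and close: "dist (c1 r) (c2 r) < \<epsilon>"
    unfolding s vis_basic_def by blast
  have "geo_ray c2" "asymp c2 \<eta>"
    using c2(1) asymp_sym unfolding ray_class_def by auto
  then have "c2 r = \<eta> r"
    using CAT0_geo_rays_asymp_eq[OF cat _ \<eta>(1)] c2(2) \<eta>(2) \<open>r > 0\<close> by simp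
  then have "\<forall>\<^sub>F n in sequentially. dist (\<rho> n r) (\<eta> r) < \<epsilon> - dist (c1 r) (\<eta> r)"
    using conv[OF \<open>r > 0\<close>] close unfolding tendsto_iff by simp
  then show "\<forall>\<^sub>F n in sequentially. ray_class (\<rho> n) \<in> s"
  proof eventually_elim
    case (elim n)
    then have "dist (c1 r) (\<rho> n r) < \<epsilon>"
      using dist_triangle[of "c1 r" "\<rho> n r" "\<eta> r"] by (simp add: dist_commute)
    then show ?case
      using c1 \<rho>(2) ray_class_in_vis_boundary[OF \<rho>(1)] ray_class_self[OF \<rho>(1)]
      unfolding s vis_basic_def by blast
  qed
qed

lemma CAT0_geo_ray_close_to_geoseg_through:
  fixes x0 P :: "'a::metric_space"
  assumes cat: "CAT0 TYPE('a)" and \<rho>: "geo_ray \<rho>" "\<rho> 0 = x0" and "asymp \<rho> c"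
    and near: "\<And>T. T \<ge> 0 \<Longrightarrow> geodesics_pass_near x0 (c T) P R"
    and r: "0 < r" "r \<le> dist x0 P - R"
  shows "dist (\<rho> r) (some_geoseg x0 P r) \<le> 2 * r * R / dist x0 P"
proof -
  note sg = geoseg_some_geoseg[OF CAT0_imp_geodesic_sp[OF cat]]
  obtain C where C: "\<And>T. T \<ge> 0 \<Longrightarrow> dist (\<rho> T) (c T) \<le> C"
    using \<open>asymp \<rho> c\<close> unfolding asymp_def by blast
  have "C \<ge> 0"
    using C[of 0] zero_le_dist[of "\<rho> 0" "c 0"] by linarith
  show ?thesis
  proof (rule le_of_le_add_divide_large[where T_min = "r + C" and b = "2 * r * C"])
    fix T :: real
    assume T: "T \<ge> r + C" "T > 0"
    define \<gamma> where "\<gamma> = some_geoseg x0 (c T)"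
    obtain s where s: "s \<in> {0..dist x0 (c T)}" and sP: "dist (\<gamma> s) P \<le> R"
      using near[OF less_imp_le[OF T(2)]] sg[of x0 "c T"] unfolding geodesics_pass_near_def \<gamma>_def
      by blast
    have "R \<ge> 0"
      using sP zero_le_dist[of "\<gamma> s" P] by linarith
    then have "x0 \<noteq> P" and rP: "r \<in> {0..dist x0 P}"
      using r by auto
    have "r \<le> dist x0 (\<gamma> s)"
      using r sP dist_triangle[of x0 P "\<gamma> s"] by (simp add: dist_commute)
    moreover have "dist P (\<gamma> s) \<le> R"
      using sP by (simp add: dist_commute)
    ultimately have "dist (some_geoseg x0 P r) (\<gamma> r) \<le> 2 * r * R / dist x0 P"
      using CAT0_geosegs_close[OF cat sg geoseg_restrict[OF sg s, folded \<gamma>_def] \<open>x0 \<noteq> P\<close>] rP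
      by blast
    moreover have "r \<le> dist x0 (c T)"
      using T C[of T] geo_ray_dist_start[OF \<rho>(1), of T] \<rho>(2) dist_triangle[of x0 "\<rho> T" "c T"]
      by (simp add: dist_commute)
    then have "dist (\<rho> r) (\<gamma> r) \<le> 2 * r * C / T"
      using CAT0_geo_ray_geoseg_close[OF cat \<rho> sg C[of T] T(2)] T r \<open>C \<ge> 0\<close>
      unfolding \<gamma>_def by simp
    ultimately show "dist (\<rho> r) (some_geoseg x0 P r) \<le> 2 * r * R / dist x0 P + 2 * r * C / T"
      using dist_triangle2[of "\<rho> r" "some_geoseg x0 P r" "\<gamma> r"] by linarith
  qed
qed

lemma CAT0_geo_rays_converge_of_pass_near:
  fixes x0 :: "'a::metric_space"
  assumes cat: "CAT0 TYPE('a)" and \<rho>: "\<And>n. geo_ray (\<rho> n)" "\<And>n. \<rho> n 0 = x0"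
    and asymp: "\<And>n. asymp (\<rho> n) (c n)"
    and near: "\<forall>\<^sub>F n in sequentially. \<forall>T\<ge>0. geodesics_pass_near x0 (c n T) (P n) R"
    and conv: "converges_to_ray x0 P \<eta>" and r: "r > 0"
  shows "(\<lambda>n. \<rho> n r) \<longlonglongrightarrow> \<eta> r"
proof (rule tendsto_of_dist_le_null)
  have far: "filterlim (\<lambda>n. dist x0 (P n)) at_top sequentially"
    using converges_to_rayD(1)[OF conv] .
  show "(\<lambda>n. 2 * r * R / dist x0 (P n) + dist (some_geoseg x0 (P n) r) (\<eta> r)) \<longlonglongrightarrow> 0"
    using tendsto_divide_0[OF tendsto_const filterlim_at_top_imp_at_infinity[OF far]]
      tendsto_dist_iff[THEN iffD1, OF converges_to_rayD(2)[OF conv less_imp_le[OF r]]]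
    by (rule tendsto_add_zero)
  have "\<forall>\<^sub>F n in sequentially. r + R \<le> dist x0 (P n)"
    using far unfolding filterlim_at_top by blast
  with near show "\<forall>\<^sub>F n in sequentially.
      dist (\<rho> n r) (\<eta> r) \<le> 2 * r * R / dist x0 (P n) + dist (some_geoseg x0 (P n) r) (\<eta> r)"
  proof eventually_elim
    case (elim n)
    then have "dist (\<rho> n r) (some_geoseg x0 (P n) r) \<le> 2 * r * R / dist x0 (P n)"
      using CAT0_geo_ray_close_to_geoseg_through[OF cat \<rho>(1) \<rho>(2) asymp] r by simp
    then show ?case
      using dist_triangle[of "\<rho> n r" "\<eta> r" "some_geoseg x0 (P n) r"] by linarith
  qed
qed

lemma CAT0_limitin_bd_act_of_pass_near:
  fixes x0 :: "'a::metric_space" and f :: "nat \<Rightarrow> 'a \<Rightarrow> 'a"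
  assumes cat: "CAT0 TYPE('a)" and pr: "proper_sp TYPE('a)"
    and f: "\<And>n. isometry_of (f n)" and c: "geo_ray c"
    and near: "\<forall>\<^sub>F n in sequentially. \<forall>T\<ge>0. geodesics_pass_near x0 (f n (c T)) (f n (c 0)) R"
    and conv: "converges_to_ray x0 (\<lambda>n. f n (c 0)) \<eta>"
  shows "limitin (visual_top x0) (\<lambda>n. bd_act (f n) (ray_class c)) (ray_class \<eta>) sequentially"
proof -
  note geod = CAT0_imp_geodesic_sp[OF cat]
  have "\<forall>n. \<exists>\<rho>. geo_ray \<rho> \<and> \<rho> 0 = x0 \<and> asymp (f n \<circ> c) \<rho>"
    using CAT0_asymp_geo_ray_from[OF cat pr geo_ray_isometric_image[OF isometry_of_dist[OF f] c]]
    by blast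
  then obtain \<rho> where "\<forall>n. geo_ray (\<rho> n) \<and> \<rho> n 0 = x0 \<and> asymp (f n \<circ> c) (\<rho> n)"
    by (rule choice[THEN exE])
  then have \<rho>: "\<And>n. geo_ray (\<rho> n)" "\<And>n. \<rho> n 0 = x0" and fc: "\<And>n. asymp (f n \<circ> c) (\<rho> n)"
    by blast+
  have "bd_act (f n) (ray_class c) = ray_class (\<rho> n)" for n
    by (rule bd_act_ray_class[OF isometry_of_dist[OF f] c fc])
  moreover have "asymp (\<rho> n) (\<lambda>T. f n (c T))" for n
    using asymp_sym[OF fc[of n]] by (simp add: o_def)
  then have "(\<lambda>n. \<rho> n r) \<longlonglongrightarrow> \<eta> r" if "r > 0" for r
    by (rule CAT0_geo_rays_converge_of_pass_near[OF cat \<rho> _ near conv that])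
  then have "limitin (visual_top x0) (\<lambda>n. ray_class (\<rho> n)) (ray_class \<eta>) sequentially"
    by (rule CAT0_limitin_visual_top[OF cat \<rho> converges_to_ray_geo_ray[OF geod conv]])
  ultimately show ?thesis
    by simp
qed

lemma CAT0_limitin_bd_act:
  fixes x x0 :: "'a::metric_space" and f :: "nat \<Rightarrow> 'a \<Rightarrow> 'a"
  assumes cat: "CAT0 TYPE('a)" and pr: "proper_sp TYPE('a)" and f: "\<And>n. isometry_of (f n)"
    and fwd: "converges_to_ray x (\<lambda>n. f n x) \<rho>p"
    and bwd: "converges_to_ray x (\<lambda>n. inv_into UNIV (f n) x) \<rho>m"
    and \<xi>: "\<xi> \<in> visibility_pts" "\<xi> \<noteq> ray_class \<rho>m"
  shows "limitin (visual_top x0) (\<lambda>n. bd_act (f n) \<xi>) (ray_class \<rho>p) sequentially"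
proof -
  note geod = CAT0_imp_geodesic_sp[OF cat]
  have "geo_ray \<rho>m"
    using converges_to_ray_geo_ray[OF geod bwd] by blast
  then have "\<exists>c. geo_line c \<and> ray_class c = \<xi> \<and> ray_class (\<lambda>t. c (- t)) = ray_class \<rho>m"
    using \<xi> ray_class_in_vis_boundary unfolding visibility_pts_def by blast
  then obtain c where c: "geo_line c" "ray_class c = \<xi>" "ray_class (\<lambda>t. c (- t)) = ray_class \<rho>m"
    by blast
  obtain \<beta> where "asymp \<rho>m \<beta>" and \<beta>: "converges_to_ray (c 0) (\<lambda>n. inv_into UNIV (f n) x0) \<beta>"
    using CAT0_converges_to_ray_rebase[OF cat pr bwd isometry_of_dist[OF isometry_of_inv[OF f], THEN eq_refl]]
    by blast
  moreover have "asymp (\<lambda>t. c (- t)) \<rho>m"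
    using ray_class_eq_imp_asymp[OF c(3) \<open>geo_ray \<rho>m\<close>] .
  ultimately have "asymp \<beta> (\<lambda>t. c (- t))"
    by (blast intro: asymp_sym asymp_trans)
  then obtain R where "\<forall>\<^sub>F n in sequentially. \<forall>T\<ge>0. geodesics_pass_near (inv_into UNIV (f n) x0) (c T) (c 0) R"
    using CAT0_geodesics_to_line_pass_near[OF cat pr c(1) _ \<beta>] \<xi>(1) c(2) by blast
  then have near: "\<forall>\<^sub>F n in sequentially. \<forall>T\<ge>0. geodesics_pass_near x0 (f n (c T)) (f n (c 0)) R"
    by eventually_elim (metis geodesics_pass_near_isometry[OF f] isometry_of_inv_apply(2)[OF f])
  obtain \<eta> where "asymp \<rho>p \<eta>" and \<eta>: "converges_to_ray x0 (\<lambda>n. f n (c 0)) \<eta>"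
    using CAT0_converges_to_ray_rebase[OF cat pr fwd isometry_of_dist[OF f, THEN eq_refl]] by blast
  then show ?thesis
    using CAT0_limitin_bd_act_of_pass_near[OF cat pr f geo_line_imp_geo_ray[OF c(1)] near \<eta>]
    by (simp add: c(2) asymp_imp_ray_class_eq)
qed

lemma CAT0_isometry_orbits_subseq:
  fixes x :: "'a::metric_space" and f :: "nat \<Rightarrow> 'a \<Rightarrow> 'a"
  assumes cat: "CAT0 TYPE('a)" and pr: "proper_sp TYPE('a)" and f: "\<And>n. isometry_of (f n)"
    and far: "filterlim (\<lambda>n. dist x (f n x)) at_top sequentially"
  obtains \<sigma> \<rho>p \<rho>m where "strict_mono \<sigma>"
    and "converges_to_ray x (\<lambda>n. f (\<sigma> n) x) \<rho>p"
    and "converges_to_ray x (\<lambda>n. inv_into UNIV (f (\<sigma> n)) x) \<rho>m"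
proof -
  obtain \<phi>\<^sub>1 \<rho>p where \<phi>\<^sub>1: "strict_mono \<phi>\<^sub>1" and fwd: "converges_to_ray x ((\<lambda>n. f n x) \<circ> \<phi>\<^sub>1) \<rho>p"
    using CAT0_converges_to_ray_subseq[OF cat pr far] by blast
  have "dist x (inv_into UNIV (f n) x) = dist x (f n x)" for n
    using isometry_of_dist[OF f[of n], of x "inv_into UNIV (f n) x"]
    by (simp add: isometry_of_inv_apply[OF f] dist_commute)
  then have "filterlim (\<lambda>n. dist x (inv_into UNIV (f (\<phi>\<^sub>1 n)) x)) at_top sequentially"
    using filterlim_compose[OF far filterlim_subseq[OF \<phi>\<^sub>1]] by simp
  then obtain \<phi>\<^sub>2 \<rho>m where \<phi>\<^sub>2: "strict_mono \<phi>\<^sub>2"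
    and bwd: "converges_to_ray x ((\<lambda>n. inv_into UNIV (f (\<phi>\<^sub>1 n)) x) \<circ> \<phi>\<^sub>2) \<rho>m"
    by (rule CAT0_converges_to_ray_subseq[OF cat pr])
  show ?thesis
  proof (rule that)
    show "strict_mono (\<phi>\<^sub>1 \<circ> \<phi>\<^sub>2)"
      using \<phi>\<^sub>1 \<phi>\<^sub>2 by (rule strict_mono_o)
    show "converges_to_ray x (\<lambda>n. f ((\<phi>\<^sub>1 \<circ> \<phi>\<^sub>2) n) x) \<rho>p"
      using converges_to_ray_compose[OF fwd \<phi>\<^sub>2] by (simp add: o_def)
    show "converges_to_ray x (\<lambda>n. inv_into UNIV (f ((\<phi>\<^sub>1 \<circ> \<phi>\<^sub>2) n)) x) \<rho>m"
      using bwd by (simp add: o_def)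
  qed
qed

theorem lemma2p8:
  fixes G :: "('g, 'b) monoid_scheme"
    and act :: "'g \<Rightarrow> 'a::metric_space \<Rightarrow> 'a"
    and g :: "nat \<Rightarrow> 'g"
  assumes "proper_sp TYPE('a)"
    and "CAT0 TYPE('a)"
    and "isom_action G act"
    and "\<And>n. g n \<in> carrier G"
    and "\<exists>x::'a. \<forall>K. compact K \<longrightarrow> (\<forall>\<^sub>F n in sequentially. act (g n) x \<notin> K)"
  shows "\<exists>\<sigma> \<xi>m \<xi>p. strict_mono \<sigma> \<and> \<xi>m \<in> vis_boundary \<and> \<xi>p \<in> vis_boundary \<and>
    (\<forall>\<xi> \<in> visibility_pts - {\<xi>m}. \<forall>x0::'a.
       limitin (visual_top x0) (\<lambda>n. bd_act (act (g (\<sigma> n))) \<xi>) \<xi>p sequentially)"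
proof -
  note pr = assms(1) and cat = assms(2)
  obtain x :: 'a where escape: "\<And>K. compact K \<Longrightarrow> \<forall>\<^sub>F n in sequentially. act (g n) x \<notin> K"
    using assms(5) by blast
  have iso: "isometry_of (act (g n))" for n
    using assms(3,4) unfolding isom_action_def by blast
  obtain \<sigma> \<rho>p \<rho>m where "strict_mono \<sigma>"
    and fwd: "converges_to_ray x (\<lambda>n. act (g (\<sigma> n)) x) \<rho>p"
    and bwd: "converges_to_ray x (\<lambda>n. inv_into UNIV (act (g (\<sigma> n))) x) \<rho>m"
    using CAT0_isometry_orbits_subseq[OF cat pr iso proper_sp_escaping_dist_at_top[OF pr escape]]
    by blast
  moreover have "ray_class \<rho>m \<in> vis_boundary" and "ray_class \<rho>p \<in> vis_boundary"
    using converges_to_ray_geo_ray[OF CAT0_imp_geodesic_sp[OF cat]] fwd bwd ray_class_in_vis_boundary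
    by blast+
  moreover have "limitin (visual_top x0) (\<lambda>n. bd_act (act (g (\<sigma> n))) \<xi>) (ray_class \<rho>p) sequentially"
    if "\<xi> \<in> visibility_pts - {ray_class \<rho>m}" for \<xi> x0
    using CAT0_limitin_bd_act[OF cat pr iso fwd bwd] that by blast
  ultimately show ?thesis
    by blast
qed

end
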